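(* Let $1<p\le2$ and assume $\sup_{\xi\in\mathcal{I}}\|v_\xi\|_{L^\infty(\overline{M})}/\|u_\xi\|_{L^\infty(\overline{M})}<\infty$. Let $\varphi$ be a positive function on $\mathcal{I}$ such that $$M_\varphi:=\sup_{t>0}\,t\sum_{\xi\in\mathcal{I}:\ t\le\varphi(\xi)}\|u_\xi\|^2_{L^\infty(\overline{M})}<\infty.$$ Then for every $f\in L^p(\overline{M})$, $$\Big(\sum_{\xi\in\mathcal{I}}|\mathcal{F}_Lf(\xi)|^p\,\|u_\xi\|_{L^\infty(\overline{M})}^{2-p}\,\varphi(\xi)^{2-p}\Big)^{1/p}\lesssim M_\varphi^{\frac{2-p}{p}}\|f\|_{L^p(\overline{M})}.$$
   Context: Standing setup: $\overline{M}$ is a smooth orientable manifold with (possibly empty) boundary and a smooth density $dx$. $L$ is a pseudo-differential operator on its interior with boundary conditions giving discrete spectrum $\{\lambda_\xi\}_{\xi\in\mathcal{I}}$ ($\mathcal{I}$ countable), eigenfunctions $u_\xi$ of $L$ and $v_\xi$ of $L^*$ ($L^*v_\xi=\overline{\lambda_\xi}v_\xi$), with $\|u_\xi\|_{L^2}=\|v_\xi\|_{L^2}=1$, $(u_\xi,v_\eta)_{L^2}=\delta_{\xi\eta}$, $\{u_\xi\}$ a Riesz basis of $L^2(\overline{M})$, and $u_\xi,v_\xi\in L^\infty(\overline{M})$. $\mathcal{F}_Lf(\xi):=\int_{\overline{M}}f(x)\overline{v_\xi(x)}\,dx$. *)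

theory Defs
  imports "HOL-Analysis.Analysis" "HOL-Probability.Essential_Supremum"
begin

text \<open>Abstract setting: the manifold with smooth density is replaced by a general
measure space M; functions are complex-valued.\<close>

definition in_Lp :: "'a measure \<Rightarrow> real \<Rightarrow> ('a \<Rightarrow> complex) \<Rightarrow> bool" where
  "in_Lp M p f \<longleftrightarrow> f \<in> borel_measurable M \<and> integrable M (\<lambda>x. norm (f x) powr p)"

definition Lp_norm :: "'a measure \<Rightarrow> real \<Rightarrow> ('a \<Rightarrow> complex) \<Rightarrow> real" where
  "Lp_norm M p f = (\<integral>x. norm (f x) powr p \<partial>M) powr (1 / p)"

definition in_Linf :: "'a measure \<Rightarrow> ('a \<Rightarrow> complex) \<Rightarrow> bool" where
  "in_Linf M f \<longleftrightarrow> f \<in> borel_measurable M \<and> esssup M (\<lambda>x. ennreal (norm (f x))) < \<infinity>"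

definition Linf_norm :: "'a measure \<Rightarrow> ('a \<Rightarrow> complex) \<Rightarrow> real" where
  "Linf_norm M f = enn2real (esssup M (\<lambda>x. ennreal (norm (f x))))"

definition L2_inner :: "'a measure \<Rightarrow> ('a \<Rightarrow> complex) \<Rightarrow> ('a \<Rightarrow> complex) \<Rightarrow> complex" where
  "L2_inner M f g = (\<integral>x. f x * cnj (g x) \<partial>M)"

definition riesz_basis :: "'a measure \<Rightarrow> 'i set \<Rightarrow> ('i \<Rightarrow> 'a \<Rightarrow> complex) \<Rightarrow> bool" where
  "riesz_basis M I u \<longleftrightarrow>
     (\<forall>\<xi>\<in>I. in_Lp M 2 (u \<xi>)) \<and>
     (\<forall>f. in_Lp M 2 f \<longrightarrow> (\<forall>\<epsilon>>0. \<exists>F c. finite F \<and> F \<subseteq> I \<and>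
          Lp_norm M 2 (\<lambda>x. f x - (\<Sum>\<xi>\<in>F. c \<xi> * u \<xi> x)) < \<epsilon>)) \<and>
     (\<exists>A B. 0 < A \<and> 0 < B \<and> (\<forall>F c. finite F \<longrightarrow> F \<subseteq> I \<longrightarrow>
          A * (\<Sum>\<xi>\<in>F. (cmod (c \<xi>))\<^sup>2) \<le> (Lp_norm M 2 (\<lambda>x. \<Sum>\<xi>\<in>F. c \<xi> * u \<xi> x))\<^sup>2 \<and>
          (Lp_norm M 2 (\<lambda>x. \<Sum>\<xi>\<in>F. c \<xi> * u \<xi> x))\<^sup>2 \<le> B * (\<Sum>\<xi>\<in>F. (cmod (c \<xi>))\<^sup>2)))"

definition FL :: "'a measure \<Rightarrow> ('i \<Rightarrow> 'a \<Rightarrow> complex) \<Rightarrow> ('a \<Rightarrow> complex) \<Rightarrow> 'i \<Rightarrow> complex" where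
  "FL M v f \<xi> = (\<integral>x. f x * cnj (v \<xi> x) \<partial>M)"

definition M_phi :: "'a measure \<Rightarrow> 'i set \<Rightarrow> ('i \<Rightarrow> 'a \<Rightarrow> complex) \<Rightarrow> ('i \<Rightarrow> real) \<Rightarrow> ennreal" where
  "M_phi M I u \<phi> = (SUP t\<in>{0<..}. ennreal t *
      infsum (\<lambda>\<xi>. ennreal ((Linf_norm M (u \<xi>))\<^sup>2)) {\<xi>\<in>I. t \<le> \<phi> \<xi>})"

end

theory Submission
  imports Defs
begin

text \<open>
  The Paley sum is the \<open>p\<close>-th moment \<open>\<Sum> w(\<xi>) T(\<xi>)^p\<close> of
  \<open>T(\<xi>) = |\<F>f(\<xi>)| / (\<parallel>u\<^sub>\<xi>\<parallel>\<^sub>\<infinity> \<phi>(\<xi>))\<close> with respect to the weights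
  \<open>w(\<xi>) = (\<parallel>u\<^sub>\<xi>\<parallel>\<^sub>\<infinity> \<phi>(\<xi>))\<^sup>2\<close>; bound \<open>T^p\<close> by the dyadic layer cake
  \<open>\<Sum>\<^sub>k 2^(k p) w{T > 2^(k+1)}\<close>. At level \<open>2^k\<close> split \<open>f\<close> at height \<open>M\<^sub>\<phi> 2^k\<close>.
  The high part is integrable, so \<open>|\<F>f\<^sub>h\<^sub>i\<^sub>g\<^sub>h(\<xi>)| \<le> K \<parallel>u\<^sub>\<xi>\<parallel>\<^sub>\<infinity> \<parallel>f\<^sub>h\<^sub>i\<^sub>g\<^sub>h\<parallel>\<^sub>1\<close>, and the weak-type
  hypothesis \<open>t \<Sum>{\<parallel>u\<^sub>\<xi>\<parallel>\<^sub>\<infinity>\<^sup>2 | \<phi>(\<xi>) \<ge> t} \<le> M\<^sub>\<phi>\<close> makes the set of \<open>\<xi>\<close> it can lift above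
  the level light. The low part is square integrable, and the lower Riesz bound gives a Bessel
  inequality for the biorthogonal coefficients. Summed over \<open>k\<close>, both estimates become
  pointwise geometric series with sum a multiple of \<open>|f|^p\<close>: Marcinkiewicz interpolation
  between a weak \<open>L\<^sup>1\<close> and a strong \<open>L\<^sup>2\<close> estimate.
\<close>

section \<open>Sums over countable sets and dyadic scales\<close>

lemma nn_integral_count_space_eq_infsum:
  fixes g :: "'x \<Rightarrow> ennreal"
  assumes "countable A"
  shows "(\<integral>\<^sup>+x. g x \<partial>count_space A) = infsum g A"
proof (rule antisym)
  show "infsum g A \<le> (\<integral>\<^sup>+x. g x \<partial>count_space A)"
  proof (subst nonneg_infsum_complete, simp, rule SUP_least, clarify)
    fix F assume F: "finite F" "F \<subseteq> A"
    have "sum g F = (\<integral>\<^sup>+x. g x * indicator F x \<partial>count_space A)"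
      using F by (subst nn_integral_count_space') auto
    also have "\<dots> \<le> (\<integral>\<^sup>+x. g x \<partial>count_space A)"
      by (intro nn_integral_mono) (auto split: split_indicator)
    finally show "sum g F \<le> (\<integral>\<^sup>+x. g x \<partial>count_space A)" .
  qed
next
  show "(\<integral>\<^sup>+x. g x \<partial>count_space A) \<le> infsum g A"
  proof (cases "finite A")
    case True
    then show ?thesis
      by (simp add: nn_integral_count_space_finite infsum_finite)
  next
    case False
    have bij: "bij_betw (from_nat_into A) UNIV A"
      using bij_betw_from_nat_into[OF assms False] .
    have "(\<integral>\<^sup>+x. g x \<partial>count_space A) = (\<Sum>n. g (from_nat_into A n))"
      using nn_integral_bij_count_space[OF bij, of g] by (simp add: nn_integral_count_space_nat)
    also have "\<dots> = (SUP n. sum g (from_nat_into A ` {..<n}))"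
      using bij by (simp add: suminf_eq_SUP sum.reindex inj_on_subset[of _ UNIV] bij_betw_def)
    also have "\<dots> \<le> infsum g A"
      using bij by (intro SUP_least, subst nonneg_infsum_complete)
        (auto intro!: SUP_upper simp: bij_betw_def)
    finally show ?thesis .
  qed
qed

lemma nn_integral_count_space_point_le:
  fixes g :: "'x \<Rightarrow> ennreal"
  assumes "x0 \<in> A"
  shows "g x0 \<le> (\<integral>\<^sup>+x. g x \<partial>count_space A)"
proof -
  have "g x0 = (\<integral>\<^sup>+x. g x * indicator {x0} x \<partial>count_space A)"
    using assms by (subst nn_integral_count_space'[of "{x0}"]) auto
  also have "\<dots> \<le> (\<integral>\<^sup>+x. g x \<partial>count_space A)"
    by (intro nn_integral_mono) (auto split: split_indicator)
  finally show ?thesis .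
qed

lemma nn_integral_geometric:
  fixes c r :: real
  assumes "0 \<le> c" "0 \<le> r" "r < 1"
  shows "(\<integral>\<^sup>+n. ennreal (c * r ^ n) \<partial>count_space UNIV) = ennreal (c / (1 - r))"
proof -
  have "(\<integral>\<^sup>+n. ennreal (c * r ^ n) \<partial>count_space UNIV) = ennreal (\<Sum>n. c * r ^ n)"
    using assms by (simp add: nn_integral_count_space_nat suminf_ennreal2 summable_geometric)
  also have "(\<Sum>n. c * r ^ n) = c / (1 - r)"
    using assms by (simp add: suminf_mult summable_geometric suminf_geometric)
  finally show ?thesis .
qed

lemma two_powr_neg_less_one: "0 < (q::real) \<Longrightarrow> 2 powr (-q) < 1"
  using powr_less_cancel_iff[of 2 "-q" 0] by simp

lemma nn_integral_dyadic_tail: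
  fixes k0 :: int and q :: real
  assumes "0 < q"
  shows "(\<integral>\<^sup>+k. ennreal (2 powr (- (real_of_int k * q))) * indicator {k0..} k \<partial>count_space UNIV)
         = ennreal (2 powr (- (real_of_int k0 * q)) / (1 - 2 powr (-q)))"
proof -
  have bij: "bij_betw (\<lambda>n::nat. k0 + int n) UNIV {k0..}"
    by (rule bij_betwI[where g="\<lambda>k. nat (k - k0)"]) auto
  have pow: "2 powr (- (real_of_int (k0 + int n) * q)) = 2 powr (- (real_of_int k0 * q)) * (2 powr (-q)) ^ n"
    for n :: nat
    by (simp add: powr_realpow[symmetric] powr_powr powr_add[symmetric] algebra_simps)
  have "(\<integral>\<^sup>+k. ennreal (2 powr (- (real_of_int k * q))) * indicator {k0..} k \<partial>count_space UNIV)
      = (\<integral>\<^sup>+n. ennreal (2 powr (- (real_of_int (k0 + int n) * q))) \<partial>count_space UNIV)"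
    using nn_integral_bij_count_space[OF bij, of "\<lambda>k. ennreal (2 powr (- (real_of_int k * q)))"]
    by (simp add: nn_integral_count_space_indicator)
  also have "\<dots> = ennreal (2 powr (- (real_of_int k0 * q)) / (1 - 2 powr (-q)))"
    unfolding pow using assms two_powr_neg_less_one by (intro nn_integral_geometric) auto
  finally show ?thesis .
qed

lemma nn_integral_dyadic_head:
  fixes k1 :: int and q :: real
  assumes "0 < q"
  shows "(\<integral>\<^sup>+k. ennreal (2 powr (real_of_int k * q)) * indicator {..k1} k \<partial>count_space UNIV)
         = ennreal (2 powr (real_of_int k1 * q) / (1 - 2 powr (-q)))"
  using nn_integral_bij_count_space[of uminus UNIV UNIV
      "\<lambda>k. ennreal (2 powr (real_of_int k * q)) * indicator {..k1} k"]
    nn_integral_dyadic_tail[OF assms, of "- k1"]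
  by (simp add: bij_uminus indicator_def minus_le_iff)

lemma dyadic_sum_below_le:
  fixes Y q :: real
  assumes "0 < Y" "0 < q"
  shows "(\<integral>\<^sup>+k. ennreal (2 powr (real_of_int k * q)) * indicator {k. 2 powr real_of_int k < Y} k \<partial>count_space UNIV)
         \<le> ennreal (Y powr q / (1 - 2 powr (-q)))"
proof -
  define k1 where "k1 = \<lceil>log 2 Y\<rceil> - 1"
  have set_eq: "{k::int. 2 powr real_of_int k < Y} = {..k1}"
    using assms(1) by (auto simp: k1_def less_log_iff[symmetric] less_ceiling_iff[symmetric])
  then have "2 powr real_of_int k1 < Y" by auto
  then have "2 powr (real_of_int k1 * q) \<le> Y powr q"
    using assms by (simp add: powr_powr[symmetric] powr_mono2)
  then show ?thesis
    unfolding set_eq nn_integral_dyadic_head[OF assms(2)]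
    using two_powr_neg_less_one[OF assms(2)] by (intro ennreal_leI divide_right_mono) auto
qed

lemma dyadic_sum_above_le:
  fixes Y q :: real
  assumes "0 < Y" "0 < q"
  shows "(\<integral>\<^sup>+k. ennreal (2 powr (- (real_of_int k * q))) * indicator {k. Y \<le> 2 powr real_of_int k} k \<partial>count_space UNIV)
         \<le> ennreal (Y powr (-q) / (1 - 2 powr (-q)))"
proof -
  define k0 where "k0 = \<lceil>log 2 Y\<rceil>"
  have set_eq: "{k::int. Y \<le> 2 powr real_of_int k} = {k0..}"
    using assms(1) by (auto simp: k0_def log_le_iff[symmetric] ceiling_le_iff)
  then have "Y \<le> 2 powr real_of_int k0" by auto
  then have "(2 powr real_of_int k0) powr (-q) \<le> Y powr (-q)"
    using assms by (intro powr_mono2') auto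
  then show ?thesis
    unfolding set_eq nn_integral_dyadic_tail[OF assms(2)]
    using two_powr_neg_less_one[OF assms(2)] by (intro ennreal_leI divide_right_mono) (auto simp: powr_powr)
qed

lemma powr_le_dyadic_sum:
  fixes T p :: real
  assumes "0 \<le> T" "0 < p"
  shows "ennreal (T powr p) \<le> ennreal (4 powr p) *
     (\<integral>\<^sup>+k. ennreal (2 powr (real_of_int k * p)) * indicator {k. 2 * 2 powr real_of_int k < T} k \<partial>count_space UNIV)"
proof (cases "T = 0")
  case False
  then have T: "0 < T" using assms by simp
  \<comment> \<open>the single scale \<open>k0\<close> with \<open>2 powr (k0 + 1) < T \<le> 2 powr (k0 + 2)\<close> already suffices\<close>
  define k0 where "k0 = \<lceil>log 2 T\<rceil> - 2"
  have "real_of_int k0 + 1 < log 2 T" "log 2 T \<le> real_of_int k0 + 2"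
    unfolding k0_def by linarith+
  then have "2 powr (real_of_int k0 + 1) < T" and T_le: "T \<le> 2 powr (real_of_int k0 + 2)"
    using T by (simp_all add: less_log_iff log_le_iff)
  then have in_set: "2 * 2 powr real_of_int k0 < T" by (simp add: powr_add)
  from T_le have "T powr p \<le> (2 powr (real_of_int k0 + 2)) powr p"
    using assms by (intro powr_mono2) auto
  also have "\<dots> = 4 powr p * 2 powr (real_of_int k0 * p)"
    by (simp add: powr_add powr_mult powr_powr mult.commute)
  finally have "ennreal (T powr p) \<le> ennreal (4 powr p) * ennreal (2 powr (real_of_int k0 * p))"
    by (simp add: ennreal_mult''[symmetric] ennreal_leI)
  also have "\<dots> \<le> ennreal (4 powr p) *
     (\<integral>\<^sup>+k. ennreal (2 powr (real_of_int k * p)) * indicator {k. 2 * 2 powr real_of_int k < T} k \<partial>count_space UNIV)"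
    using nn_integral_count_space_point_le[of k0 UNIV
        "\<lambda>k. ennreal (2 powr (real_of_int k * p)) * indicator {k. 2 * 2 powr real_of_int k < T} k"] in_set
    by (intro mult_left_mono) auto
  finally show ?thesis .
qed simp

lemma nn_integral_count_space_swap_le:
  fixes c :: "'k::countable \<Rightarrow> ennreal" and G :: "'k \<Rightarrow> 'a \<Rightarrow> ennreal"
  assumes [measurable]: "\<And>k. G k \<in> borel_measurable M"
    and le: "\<And>x. (\<integral>\<^sup>+k. c k * G k x \<partial>count_space UNIV) \<le> H x"
  shows "(\<integral>\<^sup>+k. c k * (\<integral>\<^sup>+x. G k x \<partial>M) \<partial>count_space UNIV) \<le> (\<integral>\<^sup>+x. H x \<partial>M)"
proof -
  have "(\<integral>\<^sup>+k. c k * (\<integral>\<^sup>+x. G k x \<partial>M) \<partial>count_space UNIV)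
      = (\<integral>\<^sup>+k. (\<integral>\<^sup>+x. c k * G k x \<partial>M) \<partial>count_space UNIV)"
    by (intro nn_integral_cong nn_integral_cmult[symmetric]) measurable
  also have "\<dots> = (\<integral>\<^sup>+x. (\<integral>\<^sup>+k. c k * G k x \<partial>count_space UNIV) \<partial>M)"
    by (rule nn_integral_count_space_nn_integral[symmetric]) auto
  also have "\<dots> \<le> (\<integral>\<^sup>+x. H x \<partial>M)"
    by (intro nn_integral_mono le)
  finally show ?thesis .
qed

lemma dyadic_sum_high_value_le:
  fixes Mr p F :: real
  assumes Mr: "0 < Mr" and p: "1 < p" and F: "0 \<le> F"
  shows "(\<integral>\<^sup>+k. ennreal (2 powr (real_of_int k * (p - 1))) *
            (if Mr * 2 powr real_of_int k < F then ennreal F else 0) \<partial>count_space UNIV)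
         \<le> ennreal (Mr powr (1 - p) / (1 - 2 powr (- (p - 1)))) * ennreal (F powr p)"
proof (cases "F = 0")
  case False
  with F have F: "0 < F" by simp
  have D: "0 < 1 - 2 powr (- (p - 1))" using two_powr_neg_less_one[of "p - 1"] p by simp
  have "(\<integral>\<^sup>+k. ennreal (2 powr (real_of_int k * (p - 1))) *
            (if Mr * 2 powr real_of_int k < F then ennreal F else 0) \<partial>count_space UNIV)
      = ennreal F * (\<integral>\<^sup>+k. ennreal (2 powr (real_of_int k * (p - 1))) *
            indicator {k. 2 powr real_of_int k < F / Mr} k \<partial>count_space UNIV)"
    using Mr by (subst nn_integral_cmult[symmetric])
      (auto intro!: nn_integral_cong simp: pos_less_divide_eq mult.commute split: split_indicator)
  also have "\<dots> \<le> ennreal F * ennreal ((F / Mr) powr (p - 1) / (1 - 2 powr (- (p - 1))))"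
    using dyadic_sum_below_le[of "F / Mr" "p - 1"] F Mr p by (intro mult_left_mono) auto
  also have "\<dots> = ennreal (Mr powr (1 - p) / (1 - 2 powr (- (p - 1)))) * ennreal (F powr p)"
  proof -
    have "(F / Mr) powr (p - 1) = F powr (p - 1) * Mr powr (1 - p)"
      using F Mr powr_minus[of Mr "p - 1"] by (simp add: powr_divide, simp add: divide_inverse)
    then have "F * (F / Mr) powr (p - 1) = Mr powr (1 - p) * F powr p"
      using F by (simp add: powr_mult_base mult_ac)
    then show ?thesis
      using F Mr D by (simp add: ennreal_mult[symmetric] mult_ac)
  qed
  finally show ?thesis .
next
  case True
  then have "(\<lambda>k. ennreal (2 powr (real_of_int k * (p - 1))) *
            (if Mr * 2 powr real_of_int k < F then ennreal F else 0)) = (\<lambda>k. 0)"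
    by auto
  then show ?thesis using True by simp
qed

lemma dyadic_sum_low_value_le:
  fixes Mr p F :: real
  assumes Mr: "0 < Mr" and p: "p < 2" and F: "0 \<le> F"
  shows "(\<integral>\<^sup>+k. ennreal (2 powr (- (real_of_int k * (2 - p)))) *
            (if Mr * 2 powr real_of_int k < F then 0 else ennreal (F\<^sup>2)) \<partial>count_space UNIV)
         \<le> ennreal (Mr powr (2 - p) / (1 - 2 powr (- (2 - p)))) * ennreal (F powr p)"
proof (cases "F = 0")
  case False
  with F have F: "0 < F" by simp
  have D: "0 < 1 - 2 powr (- (2 - p))" using two_powr_neg_less_one[of "2 - p"] p by simp
  have "(\<integral>\<^sup>+k. ennreal (2 powr (- (real_of_int k * (2 - p)))) *
            (if Mr * 2 powr real_of_int k < F then 0 else ennreal (F\<^sup>2)) \<partial>count_space UNIV)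
      = ennreal (F\<^sup>2) * (\<integral>\<^sup>+k. ennreal (2 powr (- (real_of_int k * (2 - p)))) *
            indicator {k. F / Mr \<le> 2 powr real_of_int k} k \<partial>count_space UNIV)"
    using Mr by (subst nn_integral_cmult[symmetric])
      (auto intro!: nn_integral_cong simp: divide_le_eq mult.commute not_less split: split_indicator)
  also have "\<dots> \<le> ennreal (F\<^sup>2) * ennreal ((F / Mr) powr (- (2 - p)) / (1 - 2 powr (- (2 - p))))"
    using dyadic_sum_above_le[of "F / Mr" "2 - p"] F Mr p by (intro mult_left_mono) auto
  also have "\<dots> = ennreal (Mr powr (2 - p) / (1 - 2 powr (- (2 - p)))) * ennreal (F powr p)"
  proof -
    have "(F / Mr) powr (- (2 - p)) = F powr (p - 2) * Mr powr (2 - p)"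
      using F Mr powr_minus[of F "2 - p"] powr_minus[of Mr "2 - p"]
      by (simp add: powr_divide, simp add: divide_inverse)
    then have "F\<^sup>2 * (F / Mr) powr (- (2 - p)) = Mr powr (2 - p) * F powr p"
      using F by (simp add: powr_add[symmetric] mult_ac flip: powr_numeral)
    then show ?thesis
      using F Mr D by (simp add: ennreal_mult[symmetric] mult_ac)
  qed
  finally show ?thesis .
next
  case True
  then have "(\<lambda>k. ennreal (2 powr (- (real_of_int k * (2 - p)))) *
            (if Mr * 2 powr real_of_int k < F then 0 else ennreal (F\<^sup>2))) = (\<lambda>k. 0)"
    by auto
  then show ?thesis using True by simp
qed

lemma exists_dyadic_shell:
  fixes R x :: real
  assumes "0 < x" "x < R"
  obtains j :: nat where "R / 2 ^ (j + 1) \<le> x" "x \<le> R / 2 ^ j"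
proof -
  obtain n :: nat where "(1 / 2) ^ n < x / R"
    using real_arch_pow_inv[of "x / R" "1 / 2"] assms by auto
  then have "R / 2 ^ (n + 1) \<le> x"
    using assms by (simp add: field_simps power_divide)
  then have ex: "\<exists>n::nat. R / 2 ^ (n + 1) \<le> x" ..
  define j where "j = (LEAST n::nat. R / 2 ^ (n + 1) \<le> x)"
  have "R / 2 ^ (j + 1) \<le> x"
    unfolding j_def by (rule LeastI_ex[OF ex])
  moreover have "x \<le> R / 2 ^ j"
  proof (cases j)
    case (Suc i)
    then have "\<not> R / 2 ^ (i + 1) \<le> x"
      using Least_le[of "\<lambda>n. R / 2 ^ (n + 1) \<le> x" i] unfolding j_def by force
    then show ?thesis using Suc by simp
  qed (use assms in simp)
  ultimately show ?thesis by (rule that)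
qed

lemma square_le_dyadic_shell_sum:
  fixes y R w :: real
  assumes y: "0 < y" "y < R" and w: "0 \<le> w"
  shows "ennreal (w * y\<^sup>2)
    \<le> (\<integral>\<^sup>+j. ennreal (R\<^sup>2 / 4 ^ j) * (ennreal w * indicator {j. R / 2 ^ (j + 1) \<le> y} j) \<partial>count_space UNIV)"
proof -
  obtain j where j: "R / 2 ^ (j + 1) \<le> y" "y \<le> R / 2 ^ j"
    using exists_dyadic_shell[OF y] .
  have "y\<^sup>2 \<le> (R / 2 ^ j)\<^sup>2" using j y by (intro power_mono) auto
  also have "\<dots> = R\<^sup>2 / 4 ^ j" by (simp add: power_divide power2_eq_square flip: power_mult_distrib)
  finally have "w * y\<^sup>2 \<le> R\<^sup>2 / 4 ^ j * w"
    using w by (metis mult.commute mult_left_mono)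
  then have "ennreal (w * y\<^sup>2) \<le> ennreal (R\<^sup>2 / 4 ^ j) * ennreal w"
    by (subst ennreal_mult'[symmetric]) (auto intro: ennreal_leI)
  also have "\<dots> = ennreal (R\<^sup>2 / 4 ^ j) * (ennreal w * indicator {j. R / 2 ^ (j + 1) \<le> y} j)"
    using j(1) by simp
  also have "\<dots> \<le> (\<integral>\<^sup>+j. ennreal (R\<^sup>2 / 4 ^ j) * (ennreal w * indicator {j. R / 2 ^ (j + 1) \<le> y} j) \<partial>count_space UNIV)"
    by (rule nn_integral_count_space_point_le) simp
  finally show ?thesis .
qed

lemma truncated_second_moment_le:
  fixes I :: "'i set" and w \<phi> :: "'i \<Rightarrow> real" and Mp :: ennreal and R :: real
  assumes I: "countable I" and pos: "\<And>\<xi>. \<xi> \<in> I \<Longrightarrow> 0 < \<phi> \<xi>"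
    and w: "\<And>\<xi>. \<xi> \<in> I \<Longrightarrow> 0 \<le> w \<xi>"
    and distr: "\<And>t. 0 < t \<Longrightarrow> ennreal t * infsum (\<lambda>\<xi>. ennreal (w \<xi>)) {\<xi>\<in>I. t \<le> \<phi> \<xi>} \<le> Mp"
    and R: "0 \<le> R"
  shows "(\<integral>\<^sup>+\<xi>. ennreal (w \<xi> * (\<phi> \<xi>)\<^sup>2) * indicator {\<xi>. \<phi> \<xi> < R} \<xi> \<partial>count_space I)
         \<le> 4 * ennreal R * Mp"
proof -
  define t where "t j = R / 2 ^ (j + 1)" for j :: nat
  have t_pos: "0 < t j" if "0 < R" for j using that by (simp add: t_def)
  have shell: "ennreal (w \<xi> * (\<phi> \<xi>)\<^sup>2) * indicator {\<xi>. \<phi> \<xi> < R} \<xi>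
      \<le> (\<integral>\<^sup>+j. ennreal (R\<^sup>2 / 4 ^ j) * (ennreal (w \<xi>) * indicator {\<xi>. t j \<le> \<phi> \<xi>} \<xi>) \<partial>count_space UNIV)"
    if \<xi>: "\<xi> \<in> I" for \<xi>
    using square_le_dyadic_shell_sum[OF pos[OF \<xi>] _ w[OF \<xi>], of R]
    by (cases "\<phi> \<xi> < R") (simp_all add: t_def indicator_def)
  have level: "ennreal (R\<^sup>2 / 4 ^ j) * (\<integral>\<^sup>+\<xi>. ennreal (w \<xi>) * indicator {\<xi>. t j \<le> \<phi> \<xi>} \<xi> \<partial>count_space I)
      \<le> ennreal (2 * R * (1 / 2) ^ j) * Mp" for j
  proof (cases "R = 0")
    case False
    with R have R: "0 < R" by simp
    have "(\<integral>\<^sup>+\<xi>. ennreal (w \<xi>) * indicator {\<xi>. t j \<le> \<phi> \<xi>} \<xi> \<partial>count_space I)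
        = infsum (\<lambda>\<xi>. ennreal (w \<xi>)) {\<xi>\<in>I. t j \<le> \<phi> \<xi>}"
      unfolding nn_integral_count_space_eq_infsum[OF I]
      by (intro infsum_cong_neutral) (auto split: split_indicator)
    moreover have "R\<^sup>2 / 4 ^ j = (2 * R * (1 / 2) ^ j) * t j"
      by (simp add: t_def power2_eq_square field_simps flip: power_mult_distrib)
    ultimately have "ennreal (R\<^sup>2 / 4 ^ j) * (\<integral>\<^sup>+\<xi>. ennreal (w \<xi>) * indicator {\<xi>. t j \<le> \<phi> \<xi>} \<xi> \<partial>count_space I)
        = ennreal (2 * R * (1 / 2) ^ j) * (ennreal (t j) * infsum (\<lambda>\<xi>. ennreal (w \<xi>)) {\<xi>\<in>I. t j \<le> \<phi> \<xi>})"
      using R less_imp_le[OF t_pos[OF R]] by (simp add: ennreal_mult' mult.assoc)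
    also have "\<dots> \<le> ennreal (2 * R * (1 / 2) ^ j) * Mp"
      by (intro mult_left_mono distr t_pos R) simp
    finally show ?thesis .
  qed simp
  have "(\<integral>\<^sup>+\<xi>. ennreal (w \<xi> * (\<phi> \<xi>)\<^sup>2) * indicator {\<xi>. \<phi> \<xi> < R} \<xi> \<partial>count_space I)
      \<le> (\<integral>\<^sup>+\<xi>. (\<integral>\<^sup>+j. ennreal (R\<^sup>2 / 4 ^ j) * (ennreal (w \<xi>) * indicator {\<xi>. t j \<le> \<phi> \<xi>} \<xi>)
          \<partial>count_space UNIV) \<partial>count_space I)"
    using shell by (intro nn_integral_mono) auto
  also have "\<dots> = (\<integral>\<^sup>+j. ennreal (R\<^sup>2 / 4 ^ j) *
      (\<integral>\<^sup>+\<xi>. ennreal (w \<xi>) * indicator {\<xi>. t j \<le> \<phi> \<xi>} \<xi> \<partial>count_space I) \<partial>count_space UNIV)"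
    by (subst nn_integral_count_space_nn_integral)
      (auto intro!: nn_integral_cong nn_integral_cmult)
  also have "\<dots> \<le> (\<integral>\<^sup>+j. ennreal (2 * R * (1 / 2) ^ j) * Mp \<partial>count_space UNIV)"
    by (intro nn_integral_mono level)
  also have "\<dots> = ennreal (2 * R / (1 - 1 / 2)) * Mp"
    using R by (simp add: nn_integral_multc nn_integral_geometric)
  also have "\<dots> = 4 * ennreal R * Mp"
    using R by (simp add: ennreal_mult)
  finally show ?thesis .
qed

section \<open>Square-integrable functions\<close>

lemma in_Lp_2_iff: "in_Lp M 2 x \<longleftrightarrow> x \<in> borel_measurable M \<and> integrable M (\<lambda>z. (cmod (x z))\<^sup>2)"
  unfolding in_Lp_def by simp

lemma Lp_norm_2: "Lp_norm M 2 x = sqrt (\<integral>z. (cmod (x z))\<^sup>2 \<partial>M)"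
  unfolding Lp_norm_def by (simp add: powr_half_sqrt)

lemma norm_add_squared_le:
  fixes a b :: "'v::real_normed_vector"
  shows "(norm (a + b))\<^sup>2 \<le> 2 * (norm a)\<^sup>2 + 2 * (norm b)\<^sup>2"
proof -
  have "(norm (a + b))\<^sup>2 \<le> (norm a + norm b)\<^sup>2"
    by (intro power_mono norm_triangle_ineq) simp
  also have "\<dots> \<le> 2 * (norm a)\<^sup>2 + 2 * (norm b)\<^sup>2"
    using sum_squares_bound[of "norm a" "norm b"] by (simp add: power2_eq_square algebra_simps)
  finally show ?thesis .
qed

lemma borel_measurable_cnj [measurable]:
  "f \<in> borel_measurable M \<Longrightarrow> (\<lambda>x. cnj (f x :: complex)) \<in> borel_measurable M"
proof -
  assume f: "f \<in> borel_measurable M"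
  have "cnj \<in> borel_measurable borel"
    by (auto intro!: borel_measurable_continuous_onI continuous_intros)
  from measurable_compose[OF f this] show ?thesis by (simp add: o_def)
qed

lemma integrable_norm_mult_of_in_L2:
  fixes x y :: "'a \<Rightarrow> complex"
  assumes "in_Lp M 2 x" "in_Lp M 2 y"
  shows "integrable M (\<lambda>z. cmod (x z) * cmod (y z))"
proof -
  have [measurable]: "x \<in> borel_measurable M" "y \<in> borel_measurable M"
    using assms by (simp_all add: in_Lp_2_iff)
  show ?thesis
  proof (rule Bochner_Integration.integrable_bound)
    show "integrable M (\<lambda>z. ((cmod (x z))\<^sup>2 + (cmod (y z))\<^sup>2) / 2)"
      using assms by (simp add: in_Lp_2_iff)
    have "a * b \<le> (a\<^sup>2 + b\<^sup>2) / 2" for a b :: real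
      using sum_squares_bound[of a b] by (simp add: power2_eq_square)
    then show "AE z in M. norm (cmod (x z) * cmod (y z)) \<le> norm (((cmod (x z))\<^sup>2 + (cmod (y z))\<^sup>2) / 2)"
      by simp
  qed measurable
qed

lemma integrable_mult_cnj_of_in_L2:
  fixes x y :: "'a \<Rightarrow> complex"
  assumes "in_Lp M 2 x" "in_Lp M 2 y"
  shows "integrable M (\<lambda>z. x z * cnj (y z))"
proof -
  have [measurable]: "x \<in> borel_measurable M" "y \<in> borel_measurable M"
    using assms by (simp_all add: in_Lp_2_iff)
  show ?thesis
    by (rule Bochner_Integration.integrable_bound[OF integrable_norm_mult_of_in_L2[OF assms]])
      (measurable, simp add: norm_mult)
qed

lemma integral_norm_mult_le_L2:
  fixes x y :: "'a \<Rightarrow> complex"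
  assumes x: "in_Lp M 2 x" and y: "in_Lp M 2 y"
  shows "(\<integral>z. cmod (x z) * cmod (y z) \<partial>M) \<le> sqrt (\<integral>z. (cmod (x z))\<^sup>2 \<partial>M) * sqrt (\<integral>z. (cmod (y z))\<^sup>2 \<partial>M)"
proof -
  have nn_sq: "(\<integral>\<^sup>+z. ennreal (cmod (w z)) ^ 2 \<partial>M) = ennreal (\<integral>z. (cmod (w z))\<^sup>2 \<partial>M)"
    if "in_Lp M 2 w" for w :: "'a \<Rightarrow> complex"
    using that by (simp add: in_Lp_2_iff ennreal_power nn_integral_eq_integral)
  have "(\<integral>\<^sup>+z. ennreal (cmod (x z)) * ennreal (cmod (y z)) \<partial>M)\<^sup>2
      \<le> (\<integral>\<^sup>+z. ennreal (cmod (x z)) ^ 2 \<partial>M) * (\<integral>\<^sup>+z. ennreal (cmod (y z)) ^ 2 \<partial>M)"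
    using x y by (intro Cauchy_Schwarz_nn_integral) (auto simp: in_Lp_2_iff)
  also have "(\<integral>\<^sup>+z. ennreal (cmod (x z)) * ennreal (cmod (y z)) \<partial>M) = ennreal (\<integral>z. cmod (x z) * cmod (y z) \<partial>M)"
    by (simp add: ennreal_mult[symmetric] nn_integral_eq_integral[OF integrable_norm_mult_of_in_L2[OF x y]])
  finally have "(\<integral>z. cmod (x z) * cmod (y z) \<partial>M)\<^sup>2 \<le> (\<integral>z. (cmod (x z))\<^sup>2 \<partial>M) * (\<integral>z. (cmod (y z))\<^sup>2 \<partial>M)"
    unfolding nn_sq[OF x] nn_sq[OF y]
    by (simp add: ennreal_power ennreal_mult''[symmetric] integral_nonneg_AE)
  then have "sqrt ((\<integral>z. cmod (x z) * cmod (y z) \<partial>M)\<^sup>2)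
      \<le> sqrt ((\<integral>z. (cmod (x z))\<^sup>2 \<partial>M) * (\<integral>z. (cmod (y z))\<^sup>2 \<partial>M))"
    by (rule real_sqrt_le_mono)
  then show ?thesis by (simp add: real_sqrt_mult integral_nonneg_AE)
qed

lemma norm_integral_mult_cnj_le_L2:
  fixes x y :: "'a \<Rightarrow> complex"
  assumes "in_Lp M 2 x" "in_Lp M 2 y"
  shows "cmod (\<integral>z. x z * cnj (y z) \<partial>M) \<le> sqrt (\<integral>z. (cmod (x z))\<^sup>2 \<partial>M) * sqrt (\<integral>z. (cmod (y z))\<^sup>2 \<partial>M)"
proof -
  have "cmod (\<integral>z. x z * cnj (y z) \<partial>M) \<le> (\<integral>z. cmod (x z) * cmod (y z) \<partial>M)"
    using integral_norm_bound[of M "\<lambda>z. x z * cnj (y z)"] by (simp add: norm_mult)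
  also have "\<dots> \<le> sqrt (\<integral>z. (cmod (x z))\<^sup>2 \<partial>M) * sqrt (\<integral>z. (cmod (y z))\<^sup>2 \<partial>M)"
    by (rule integral_norm_mult_le_L2[OF assms])
  finally show ?thesis .
qed

lemma in_L2_add:
  fixes x y :: "'a \<Rightarrow> complex"
  assumes "in_Lp M 2 x" "in_Lp M 2 y"
  shows "in_Lp M 2 (\<lambda>z. x z + y z)"
proof -
  have [measurable]: "x \<in> borel_measurable M" "y \<in> borel_measurable M"
    using assms by (simp_all add: in_Lp_2_iff)
  have "integrable M (\<lambda>z. (cmod (x z + y z))\<^sup>2)"
  proof (rule Bochner_Integration.integrable_bound)
    show "integrable M (\<lambda>z. 2 * (cmod (x z))\<^sup>2 + 2 * (cmod (y z))\<^sup>2)"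
      using assms by (simp add: in_Lp_2_iff)
    show "AE z in M. norm ((cmod (x z + y z))\<^sup>2) \<le> norm (2 * (cmod (x z))\<^sup>2 + 2 * (cmod (y z))\<^sup>2)"
      by (intro AE_I2) (simp add: norm_add_squared_le)
  qed measurable
  then show ?thesis by (simp add: in_Lp_2_iff)
qed

lemma in_L2_cmult:
  fixes x :: "'a \<Rightarrow> complex"
  assumes "in_Lp M 2 x"
  shows "in_Lp M 2 (\<lambda>z. c * x z)"
proof -
  have [measurable]: "x \<in> borel_measurable M"
    using assms by (simp add: in_Lp_2_iff)
  have "(\<lambda>z. c * x z) \<in> borel_measurable M" by measurable
  then show ?thesis
    using assms by (simp add: in_Lp_2_iff norm_mult power_mult_distrib)
qed

lemma in_L2_sum:
  fixes x :: "'i \<Rightarrow> 'a \<Rightarrow> complex"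
  assumes "finite G" "\<And>i. i \<in> G \<Longrightarrow> in_Lp M 2 (x i)"
  shows "in_Lp M 2 (\<lambda>z. \<Sum>i\<in>G. x i z)"
  using assms
proof (induction G rule: finite_induct)
  case empty
  then show ?case by (simp add: in_Lp_2_iff)
next
  case (insert a G)
  then show ?case by (simp add: in_L2_add)
qed

lemma integral_norm_add_squared_le:
  fixes x y :: "'a \<Rightarrow> complex"
  assumes "in_Lp M 2 x" "in_Lp M 2 y"
  shows "(\<integral>z. (cmod (x z + y z))\<^sup>2 \<partial>M) \<le> 2 * (\<integral>z. (cmod (x z))\<^sup>2 \<partial>M) + 2 * (\<integral>z. (cmod (y z))\<^sup>2 \<partial>M)"
proof -
  have "(\<integral>z. (cmod (x z + y z))\<^sup>2 \<partial>M) \<le> (\<integral>z. 2 * (cmod (x z))\<^sup>2 + 2 * (cmod (y z))\<^sup>2 \<partial>M)"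
    using in_L2_add[OF assms] assms
    by (intro integral_mono) (auto simp: in_Lp_2_iff norm_add_squared_le)
  also have "\<dots> = 2 * (\<integral>z. (cmod (x z))\<^sup>2 \<partial>M) + 2 * (\<integral>z. (cmod (y z))\<^sup>2 \<partial>M)"
    using assms by (simp add: in_Lp_2_iff)
  finally show ?thesis .
qed

section \<open>A Bessel inequality for the biorthogonal system\<close>

lemma FL_finite_combination:
  assumes u2: "\<forall>\<xi>\<in>I. in_Lp M 2 (u \<xi>)" and v2: "\<forall>\<xi>\<in>I. in_Lp M 2 (v \<xi>)"
    and biorth: "\<forall>\<xi>\<in>I. \<forall>\<eta>\<in>I. L2_inner M (u \<xi>) (v \<eta>) = (if \<xi> = \<eta> then 1 else 0)"
    and G: "finite G" "G \<subseteq> I" and \<xi>: "\<xi> \<in> I"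
  shows "FL M v (\<lambda>x. \<Sum>\<eta>\<in>G. c \<eta> * u \<eta> x) \<xi> = (if \<xi> \<in> G then c \<xi> else 0)"
proof -
  have "FL M v (\<lambda>x. \<Sum>\<eta>\<in>G. c \<eta> * u \<eta> x) \<xi> = (\<integral>x. (\<Sum>\<eta>\<in>G. c \<eta> * (u \<eta> x * cnj (v \<xi> x))) \<partial>M)"
    unfolding FL_def by (simp add: sum_distrib_right mult.assoc)
  also have "\<dots> = (\<Sum>\<eta>\<in>G. c \<eta> * L2_inner M (u \<eta>) (v \<xi>))"
    unfolding L2_inner_def using G u2 v2 \<xi>
    by (subst Bochner_Integration.integral_sum)
      (auto intro!: integrable_mult_right integrable_mult_cnj_of_in_L2)
  also have "\<dots> = (\<Sum>\<eta>\<in>G. if \<eta> = \<xi> then c \<eta> else 0)"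
    using G biorth \<xi> by (intro sum.cong) auto
  also have "\<dots> = (if \<xi> \<in> G then c \<xi> else 0)"
    using G by (simp add: sum.delta')
  finally show ?thesis .
qed

lemma FL_add:
  assumes "in_Lp M 2 g" "in_Lp M 2 d" "in_Lp M 2 (v \<xi>)"
  shows "FL M v (\<lambda>x. g x + d x) \<xi> = FL M v g \<xi> + FL M v d \<xi>"
  unfolding FL_def using assms
  by (simp add: distrib_right integrable_mult_cnj_of_in_L2)

lemma norm_FL_squared_le:
  assumes "in_Lp M 2 h" "in_Lp M 2 (v \<xi>)" "Lp_norm M 2 (v \<xi>) = 1"
  shows "(cmod (FL M v h \<xi>))\<^sup>2 \<le> (\<integral>x. (cmod (h x))\<^sup>2 \<partial>M)"
proof -
  have "cmod (FL M v h \<xi>) \<le> sqrt (\<integral>x. (cmod (h x))\<^sup>2 \<partial>M)"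
    using norm_integral_mult_cnj_le_L2[OF assms(1,2)] assms(3) unfolding FL_def Lp_norm_2 by simp
  from power_mono[OF this norm_ge_zero, of 2] show ?thesis
    by (simp add: integral_nonneg_AE)
qed

lemma sum_FL_finite_combination_le:
  assumes u2: "\<forall>\<xi>\<in>I. in_Lp M 2 (u \<xi>)" and v2: "\<forall>\<xi>\<in>I. in_Lp M 2 (v \<xi>)"
    and biorth: "\<forall>\<xi>\<in>I. \<forall>\<eta>\<in>I. L2_inner M (u \<xi>) (v \<eta>) = (if \<xi> = \<eta> then 1 else 0)"
    and A: "0 < A"
    and lower: "\<And>G c. finite G \<Longrightarrow> G \<subseteq> I \<Longrightarrow>
      A * (\<Sum>\<xi>\<in>G. (cmod (c \<xi>))\<^sup>2) \<le> (Lp_norm M 2 (\<lambda>x. \<Sum>\<xi>\<in>G. c \<xi> * u \<xi> x))\<^sup>2"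
    and F: "finite F" "F \<subseteq> I" and G: "finite G" "G \<subseteq> I"
  shows "(\<Sum>\<xi>\<in>F. (cmod (FL M v (\<lambda>x. \<Sum>\<eta>\<in>G. c \<eta> * u \<eta> x) \<xi>))\<^sup>2)
    \<le> (\<integral>x. (cmod (\<Sum>\<eta>\<in>G. c \<eta> * u \<eta> x))\<^sup>2 \<partial>M) / A"
proof -
  have "(\<Sum>\<xi>\<in>F. (cmod (FL M v (\<lambda>x. \<Sum>\<eta>\<in>G. c \<eta> * u \<eta> x) \<xi>))\<^sup>2)
      = (\<Sum>\<xi>\<in>F. if \<xi> \<in> G then (cmod (c \<xi>))\<^sup>2 else 0)"
    using F FL_finite_combination[OF u2 v2 biorth G] by (intro sum.cong) auto
  also have "\<dots> = (\<Sum>\<xi>\<in>F \<inter> G. (cmod (c \<xi>))\<^sup>2)"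
    using F by (simp add: sum.inter_restrict)
  also have "\<dots> \<le> (\<Sum>\<xi>\<in>G. (cmod (c \<xi>))\<^sup>2)"
    using G by (intro sum_mono2) auto
  also have "\<dots> \<le> (\<integral>x. (cmod (\<Sum>\<eta>\<in>G. c \<eta> * u \<eta> x))\<^sup>2 \<partial>M) / A"
    using lower[OF G, of c] A unfolding Lp_norm_2 by (simp add: field_simps integral_nonneg_AE)
  finally show ?thesis .
qed

lemma sum_FL_squared_approx_le:
  fixes h :: "'a \<Rightarrow> complex" and A \<epsilon> :: real
  assumes u2: "\<forall>\<xi>\<in>I. in_Lp M 2 (u \<xi>)"
    and v_norm: "\<forall>\<xi>\<in>I. in_Lp M 2 (v \<xi>) \<and> Lp_norm M 2 (v \<xi>) = 1"
    and biorth: "\<forall>\<xi>\<in>I. \<forall>\<eta>\<in>I. L2_inner M (u \<xi>) (v \<eta>) = (if \<xi> = \<eta> then 1 else 0)"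
    and A: "0 < A"
    and lower: "\<And>G c. finite G \<Longrightarrow> G \<subseteq> I \<Longrightarrow>
      A * (\<Sum>\<xi>\<in>G. (cmod (c \<xi>))\<^sup>2) \<le> (Lp_norm M 2 (\<lambda>x. \<Sum>\<xi>\<in>G. c \<xi> * u \<xi> x))\<^sup>2"
    and h: "in_Lp M 2 h" and F: "finite F" "F \<subseteq> I"
    and G: "finite G" "G \<subseteq> I"
    and approx: "Lp_norm M 2 (\<lambda>x. h x - (\<Sum>\<xi>\<in>G. c \<xi> * u \<xi> x)) < \<epsilon>"
  shows "(\<Sum>\<xi>\<in>F. (cmod (FL M v h \<xi>))\<^sup>2)
    \<le> 4 / A * (\<integral>x. (cmod (h x))\<^sup>2 \<partial>M) + (4 / A + 2 * card F) * \<epsilon>\<^sup>2"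
proof -
  define g where "g = (\<lambda>x. \<Sum>\<eta>\<in>G. c \<eta> * u \<eta> x)"
  define d where "d = (\<lambda>x. h x - g x)"
  have v2: "\<forall>\<xi>\<in>I. in_Lp M 2 (v \<xi>)" using v_norm by blast
  have g2: "in_Lp M 2 g"
    unfolding g_def using G u2 by (intro in_L2_sum in_L2_cmult) auto
  have d2: "in_Lp M 2 d"
    using in_L2_add[OF h in_L2_cmult[OF g2, of "- 1"]] by (simp add: d_def)
  have "sqrt (\<integral>x. (cmod (d x))\<^sup>2 \<partial>M) < \<epsilon>"
    using approx by (simp add: d_def g_def Lp_norm_2)
  from power_mono[OF less_imp_le[OF this] real_sqrt_ge_zero, of 2]
  have d_small: "(\<integral>x. (cmod (d x))\<^sup>2 \<partial>M) \<le> \<epsilon>\<^sup>2"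
    by (simp add: integral_nonneg_AE)
  have "(\<integral>x. (cmod (g x))\<^sup>2 \<partial>M) = (\<integral>x. (cmod (h x + - 1 * d x))\<^sup>2 \<partial>M)"
    by (simp add: d_def)
  also have "\<dots> \<le> 2 * (\<integral>x. (cmod (h x))\<^sup>2 \<partial>M) + 2 * (\<integral>x. (cmod (d x))\<^sup>2 \<partial>M)"
    using integral_norm_add_squared_le[OF h in_L2_cmult[OF d2, of "- 1"]] by simp
  finally have g_bound: "(\<integral>x. (cmod (g x))\<^sup>2 \<partial>M) \<le> 2 * (\<integral>x. (cmod (h x))\<^sup>2 \<partial>M) + 2 * \<epsilon>\<^sup>2"
    using d_small by linarith
  have coeff: "(\<Sum>\<xi>\<in>F. (cmod (FL M v g \<xi>))\<^sup>2) \<le> (\<integral>x. (cmod (g x))\<^sup>2 \<partial>M) / A"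
    unfolding g_def using u2 v2 biorth A lower F G by (rule sum_FL_finite_combination_le)
  have split: "(cmod (FL M v h \<xi>))\<^sup>2 \<le> 2 * (cmod (FL M v g \<xi>))\<^sup>2 + 2 * \<epsilon>\<^sup>2" if "\<xi> \<in> F" for \<xi>
  proof -
    have \<xi>: "in_Lp M 2 (v \<xi>)" "Lp_norm M 2 (v \<xi>) = 1" using that F v_norm by auto
    have "FL M v h \<xi> = FL M v g \<xi> + FL M v d \<xi>"
      using FL_add[where v=v and \<xi>=\<xi>, OF g2 d2 \<xi>(1)] by (simp add: d_def)
    then have "(cmod (FL M v h \<xi>))\<^sup>2 \<le> 2 * (cmod (FL M v g \<xi>))\<^sup>2 + 2 * (cmod (FL M v d \<xi>))\<^sup>2"
      by (simp add: norm_add_squared_le)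
    also have "(cmod (FL M v d \<xi>))\<^sup>2 \<le> \<epsilon>\<^sup>2"
      using norm_FL_squared_le[where v=v and \<xi>=\<xi>, OF d2 \<xi>] d_small by linarith
    finally show ?thesis by simp
  qed
  have "(\<Sum>\<xi>\<in>F. (cmod (FL M v h \<xi>))\<^sup>2) \<le> (\<Sum>\<xi>\<in>F. 2 * (cmod (FL M v g \<xi>))\<^sup>2 + 2 * \<epsilon>\<^sup>2)"
    by (rule sum_mono[OF split])
  also have "\<dots> = 2 * (\<Sum>\<xi>\<in>F. (cmod (FL M v g \<xi>))\<^sup>2) + 2 * card F * \<epsilon>\<^sup>2"
    by (simp add: sum.distrib sum_distrib_left)
  also have "\<dots> \<le> 2 * ((2 * (\<integral>x. (cmod (h x))\<^sup>2 \<partial>M) + 2 * \<epsilon>\<^sup>2) / A) + 2 * card F * \<epsilon>\<^sup>2"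
    using order_trans[OF coeff divide_right_mono[OF g_bound less_imp_le[OF A]]] by linarith
  also have "\<dots> = 4 / A * (\<integral>x. (cmod (h x))\<^sup>2 \<partial>M) + (4 / A + 2 * card F) * \<epsilon>\<^sup>2"
    using A by (simp add: field_simps)
  finally show ?thesis .
qed

lemma FL_bessel_inequality:
  assumes I: "countable I"
    and v_norm: "\<forall>\<xi>\<in>I. in_Lp M 2 (v \<xi>) \<and> Lp_norm M 2 (v \<xi>) = 1"
    and biorth: "\<forall>\<xi>\<in>I. \<forall>\<eta>\<in>I. L2_inner M (u \<xi>) (v \<eta>) = (if \<xi> = \<eta> then 1 else 0)"
    and riesz: "riesz_basis M I u"
  shows "\<exists>B>0. \<forall>h. in_Lp M 2 h \<longrightarrow>
     (\<integral>\<^sup>+\<xi>. ennreal ((cmod (FL M v h \<xi>))\<^sup>2) \<partial>count_space I) \<le> ennreal (B * (\<integral>x. (cmod (h x))\<^sup>2 \<partial>M))"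
proof -
  have u2: "\<forall>\<xi>\<in>I. in_Lp M 2 (u \<xi>)"
    and dense: "\<And>f \<epsilon>. in_Lp M 2 f \<Longrightarrow> 0 < \<epsilon> \<Longrightarrow> \<exists>G c. finite G \<and> G \<subseteq> I \<and>
          Lp_norm M 2 (\<lambda>x. f x - (\<Sum>\<xi>\<in>G. c \<xi> * u \<xi> x)) < \<epsilon>"
    using riesz unfolding riesz_basis_def by blast+
  obtain A where A: "0 < A" and lower: "\<And>G c. finite G \<Longrightarrow> G \<subseteq> I \<Longrightarrow>
      A * (\<Sum>\<xi>\<in>G. (cmod (c \<xi>))\<^sup>2) \<le> (Lp_norm M 2 (\<lambda>x. \<Sum>\<xi>\<in>G. c \<xi> * u \<xi> x))\<^sup>2"
    using riesz unfolding riesz_basis_def by meson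
  have finite_sum: "(\<Sum>\<xi>\<in>F. (cmod (FL M v h \<xi>))\<^sup>2) \<le> 4 / A * (\<integral>x. (cmod (h x))\<^sup>2 \<partial>M)"
    if h: "in_Lp M 2 h" and F: "finite F" "F \<subseteq> I" for h F
  proof (rule field_le_epsilon)
    fix e :: real assume e: "0 < e"
    define D where "D = 4 / A + 2 * card F"
    have D: "0 < D" using A by (simp add: D_def add_pos_nonneg)
    obtain G c where G: "finite G" "G \<subseteq> I"
      and approx: "Lp_norm M 2 (\<lambda>x. h x - (\<Sum>\<xi>\<in>G. c \<xi> * u \<xi> x)) < sqrt (e / D)"
      using dense[OF h, of "sqrt (e / D)"] e D by auto
    have "(\<Sum>\<xi>\<in>F. (cmod (FL M v h \<xi>))\<^sup>2) \<le> 4 / A * (\<integral>x. (cmod (h x))\<^sup>2 \<partial>M) + D * (sqrt (e / D))\<^sup>2"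
      using sum_FL_squared_approx_le[OF u2 v_norm biorth A lower h F G approx] by (simp add: D_def)
    then show "(\<Sum>\<xi>\<in>F. (cmod (FL M v h \<xi>))\<^sup>2) \<le> 4 / A * (\<integral>x. (cmod (h x))\<^sup>2 \<partial>M) + e"
      using e D by simp
  qed
  show ?thesis
  proof (intro exI[of _ "4 / A"] conjI allI impI)
    show "0 < 4 / A" using A by simp
    fix h assume h: "in_Lp M 2 h"
    show "(\<integral>\<^sup>+\<xi>. ennreal ((cmod (FL M v h \<xi>))\<^sup>2) \<partial>count_space I) \<le> ennreal (4 / A * (\<integral>x. (cmod (h x))\<^sup>2 \<partial>M))"
      unfolding nn_integral_count_space_eq_infsum[OF I]
      using finite_sum[OF h]
      by (subst nonneg_infsum_complete) (auto intro!: SUP_least ennreal_leI simp: sum_ennreal)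
  qed
qed

section \<open>Bounded functions and truncation\<close>

lemma Linf_norm_AE:
  assumes "in_Linf M w"
  shows "AE x in M. cmod (w x) \<le> Linf_norm M w"
  using esssup_AE[of "\<lambda>x. ennreal (cmod (w x))" M]
proof (rule eventually_mono)
  fix x assume "ennreal (cmod (w x)) \<le> esssup M (\<lambda>x. ennreal (cmod (w x)))"
  then have "enn2real (ennreal (cmod (w x))) \<le> Linf_norm M w"
    using assms unfolding in_Linf_def Linf_norm_def by (intro enn2real_mono) auto
  then show "cmod (w x) \<le> Linf_norm M w" by simp
qed

lemma Linf_norm_pos:
  assumes "in_Lp M 2 w" "Lp_norm M 2 w = 1" "in_Linf M w"
  shows "0 < Linf_norm M w"
proof (rule ccontr)
  assume "\<not> 0 < Linf_norm M w"
  moreover have "0 \<le> Linf_norm M w" by (simp add: Linf_norm_def)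
  ultimately have "Linf_norm M w = 0" by simp
  then have "AE x in M. (cmod (w x))\<^sup>2 = 0"
    using Linf_norm_AE[OF assms(3)] by (auto elim: eventually_mono)
  then have "Lp_norm M 2 w = 0" by (simp add: Lp_norm_2 integral_eq_zero_AE)
  with assms(2) show False by simp
qed

lemma
  fixes g w :: "'a \<Rightarrow> complex"
  assumes g: "g \<in> borel_measurable M" "integrable M (\<lambda>x. cmod (g x))" and w: "in_Linf M w"
  shows integrable_mult_cnj_of_Linf: "integrable M (\<lambda>x. g x * cnj (w x))"
    and norm_integral_mult_cnj_le_Linf:
      "cmod (\<integral>x. g x * cnj (w x) \<partial>M) \<le> Linf_norm M w * (\<integral>x. cmod (g x) \<partial>M)"
proof -
  have [measurable]: "g \<in> borel_measurable M" "w \<in> borel_measurable M"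
    using g w unfolding in_Linf_def by simp_all
  have bound: "AE x in M. cmod (g x * cnj (w x)) \<le> Linf_norm M w * cmod (g x)"
    using Linf_norm_AE[OF w]
  proof (rule eventually_mono)
    fix x assume "cmod (w x) \<le> Linf_norm M w"
    then have "cmod (g x) * cmod (w x) \<le> cmod (g x) * Linf_norm M w"
      by (rule mult_left_mono) simp
    then show "cmod (g x * cnj (w x)) \<le> Linf_norm M w * cmod (g x)"
      by (simp add: norm_mult mult.commute)
  qed
  have Linf_nonneg: "0 \<le> Linf_norm M w" by (simp add: Linf_norm_def)
  show int: "integrable M (\<lambda>x. g x * cnj (w x))"
  proof (rule Bochner_Integration.integrable_bound)
    show "integrable M (\<lambda>x. Linf_norm M w * cmod (g x))" using g(2) by simp
    show "AE x in M. norm (g x * cnj (w x)) \<le> norm (Linf_norm M w * cmod (g x))"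
      using bound by (rule eventually_mono) (simp add: Linf_nonneg)
  qed measurable
  have "cmod (\<integral>x. g x * cnj (w x) \<partial>M) \<le> (\<integral>x. cmod (g x * cnj (w x)) \<partial>M)"
    by (rule integral_norm_bound)
  also have "\<dots> \<le> (\<integral>x. Linf_norm M w * cmod (g x) \<partial>M)"
    using int g(2) bound by (intro integral_mono_AE) auto
  finally show "cmod (\<integral>x. g x * cnj (w x) \<partial>M) \<le> Linf_norm M w * (\<integral>x. cmod (g x) \<partial>M)"
    by simp
qed

definition high_part :: "real \<Rightarrow> ('a \<Rightarrow> complex) \<Rightarrow> 'a \<Rightarrow> complex" where
  "high_part t f x = (if t < cmod (f x) then f x else 0)"

definition low_part :: "real \<Rightarrow> ('a \<Rightarrow> complex) \<Rightarrow> 'a \<Rightarrow> complex" where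
  "low_part t f x = (if t < cmod (f x) then 0 else f x)"

lemma high_part_plus_low_part: "high_part t f x + low_part t f x = f x"
  by (simp add: high_part_def low_part_def)

lemma borel_measurable_high_part [measurable]:
  assumes [measurable]: "f \<in> borel_measurable M"
  shows "high_part t f \<in> borel_measurable M"
  unfolding high_part_def[abs_def] by measurable

lemma borel_measurable_low_part [measurable]:
  assumes [measurable]: "f \<in> borel_measurable M"
  shows "low_part t f \<in> borel_measurable M"
  unfolding low_part_def[abs_def] by measurable

lemma integrable_high_part:
  fixes f :: "'a \<Rightarrow> complex"
  assumes f: "in_Lp M p f" and p: "1 \<le> p" and t: "0 < t"
  shows "integrable M (\<lambda>x. cmod (high_part t f x))"
proof (rule Bochner_Integration.integrable_bound)
  show "integrable M (\<lambda>x. cmod (f x) powr p / t powr (p - 1))"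
    using f by (simp add: in_Lp_def)
  have [measurable]: "f \<in> borel_measurable M"
    using f by (simp add: in_Lp_def)
  show "(\<lambda>x. cmod (high_part t f x)) \<in> borel_measurable M"
    by measurable
  have "y \<le> y powr p / t powr (p - 1)" if "t < y" for y
  proof -
    have "y * t powr (p - 1) \<le> y * y powr (p - 1)"
      using that t p by (intro mult_left_mono powr_mono2) auto
    then show ?thesis
      using that t by (simp add: powr_mult_base field_simps)
  qed
  then show "AE x in M. norm (cmod (high_part t f x)) \<le> norm (cmod (f x) powr p / t powr (p - 1))"
    by (simp add: high_part_def)
qed

lemma in_L2_low_part:
  fixes f :: "'a \<Rightarrow> complex"
  assumes f: "in_Lp M p f" and p: "p \<le> 2" and t: "0 < t"
  shows "in_Lp M 2 (low_part t f)"
  unfolding in_Lp_2_iff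
proof
  have [measurable]: "f \<in> borel_measurable M"
    using f by (simp add: in_Lp_def)
  show "low_part t f \<in> borel_measurable M"
    by measurable
  show "integrable M (\<lambda>x. (cmod (low_part t f x))\<^sup>2)"
  proof (rule Bochner_Integration.integrable_bound)
    show "integrable M (\<lambda>x. t powr (2 - p) * cmod (f x) powr p)"
      using f by (simp add: in_Lp_def)
    show "(\<lambda>x. (cmod (low_part t f x))\<^sup>2) \<in> borel_measurable M"
      using f by (simp add: in_Lp_def)
    have "y\<^sup>2 \<le> t powr (2 - p) * y powr p" if "0 \<le> y" "y \<le> t" for y
    proof (cases "y = 0")
      case False
      then have "y\<^sup>2 = y powr (2 - p) * y powr p"
        using that by (simp add: powr_add[symmetric])
      also have "\<dots> \<le> t powr (2 - p) * y powr p"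
        using that p by (intro mult_right_mono powr_mono2) auto
      finally show ?thesis .
    qed simp
    then show "AE x in M. norm ((cmod (low_part t f x))\<^sup>2) \<le> norm (t powr (2 - p) * cmod (f x) powr p)"
      by (simp add: low_part_def not_less)
  qed
qed

lemma dyadic_sum_high_parts_le:
  fixes f :: "'a \<Rightarrow> complex"
  assumes [measurable]: "f \<in> borel_measurable M" and "0 < Mr" "1 < p"
  shows "(\<integral>\<^sup>+k. ennreal (2 powr (real_of_int k * (p - 1))) *
            (\<integral>\<^sup>+x. ennreal (cmod (high_part (Mr * 2 powr real_of_int k) f x)) \<partial>M) \<partial>count_space UNIV)
    \<le> ennreal (Mr powr (1 - p) / (1 - 2 powr (- (p - 1)))) * (\<integral>\<^sup>+x. ennreal (cmod (f x) powr p) \<partial>M)"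
proof -
  have "(\<integral>\<^sup>+k. ennreal (2 powr (real_of_int k * (p - 1))) *
            (\<integral>\<^sup>+x. ennreal (cmod (high_part (Mr * 2 powr real_of_int k) f x)) \<partial>M) \<partial>count_space UNIV)
      \<le> (\<integral>\<^sup>+x. ennreal (Mr powr (1 - p) / (1 - 2 powr (- (p - 1)))) * ennreal (cmod (f x) powr p) \<partial>M)"
  proof (rule nn_integral_count_space_swap_le)
    fix x
    have "ennreal (cmod (high_part t f x)) = (if t < cmod (f x) then ennreal (cmod (f x)) else 0)" for t
      by (simp add: high_part_def)
    then show "(\<integral>\<^sup>+k. ennreal (2 powr (real_of_int k * (p - 1))) *
            ennreal (cmod (high_part (Mr * 2 powr real_of_int k) f x)) \<partial>count_space UNIV)
      \<le> ennreal (Mr powr (1 - p) / (1 - 2 powr (- (p - 1)))) * ennreal (cmod (f x) powr p)"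
      using assms by (simp only:) (rule dyadic_sum_high_value_le, simp_all)
  qed measurable
  also have "\<dots> = ennreal (Mr powr (1 - p) / (1 - 2 powr (- (p - 1)))) * (\<integral>\<^sup>+x. ennreal (cmod (f x) powr p) \<partial>M)"
    by (rule nn_integral_cmult) measurable
  finally show ?thesis .
qed

lemma dyadic_sum_low_parts_le:
  fixes f :: "'a \<Rightarrow> complex"
  assumes [measurable]: "f \<in> borel_measurable M" and "0 < Mr" "p < 2"
  shows "(\<integral>\<^sup>+k. ennreal (2 powr (- (real_of_int k * (2 - p)))) *
            (\<integral>\<^sup>+x. ennreal ((cmod (low_part (Mr * 2 powr real_of_int k) f x))\<^sup>2) \<partial>M) \<partial>count_space UNIV)
    \<le> ennreal (Mr powr (2 - p) / (1 - 2 powr (- (2 - p)))) * (\<integral>\<^sup>+x. ennreal (cmod (f x) powr p) \<partial>M)"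
proof -
  have "(\<integral>\<^sup>+k. ennreal (2 powr (- (real_of_int k * (2 - p)))) *
            (\<integral>\<^sup>+x. ennreal ((cmod (low_part (Mr * 2 powr real_of_int k) f x))\<^sup>2) \<partial>M) \<partial>count_space UNIV)
      \<le> (\<integral>\<^sup>+x. ennreal (Mr powr (2 - p) / (1 - 2 powr (- (2 - p)))) * ennreal (cmod (f x) powr p) \<partial>M)"
  proof (rule nn_integral_count_space_swap_le)
    fix x
    have "ennreal ((cmod (low_part t f x))\<^sup>2) = (if t < cmod (f x) then 0 else ennreal ((cmod (f x))\<^sup>2))" for t
      by (simp add: low_part_def)
    then show "(\<integral>\<^sup>+k. ennreal (2 powr (- (real_of_int k * (2 - p)))) *
            ennreal ((cmod (low_part (Mr * 2 powr real_of_int k) f x))\<^sup>2) \<partial>count_space UNIV)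
      \<le> ennreal (Mr powr (2 - p) / (1 - 2 powr (- (2 - p)))) * ennreal (cmod (f x) powr p)"
      using assms by (simp only:) (rule dyadic_sum_low_value_le, simp_all)
  qed measurable
  also have "\<dots> = ennreal (Mr powr (2 - p) / (1 - 2 powr (- (2 - p)))) * (\<integral>\<^sup>+x. ennreal (cmod (f x) powr p) \<partial>M)"
    by (rule nn_integral_cmult) measurable
  finally show ?thesis .
qed

section \<open>The Paley inequality\<close>

definition paley_constant :: "real \<Rightarrow> real \<Rightarrow> real \<Rightarrow> real" where
  "paley_constant K B p = (if p = 2 then B
     else 4 powr p * (4 * K / (1 - 2 powr (- (p - 1))) + B / (1 - 2 powr (- (2 - p)))))"

lemma paley_constant_nonneg:
  assumes "0 \<le> K" "0 \<le> B" "1 < p" "p \<le> 2"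
  shows "0 \<le> paley_constant K B p"
  using assms two_powr_neg_less_one[of "p - 1"] two_powr_neg_less_one[of "2 - p"]
  by (auto simp: paley_constant_def intro!: mult_nonneg_nonneg add_nonneg_nonneg divide_nonneg_pos)

lemma summable_on_infsum_le_of_nn_integral_le:
  fixes g :: "'i \<Rightarrow> real"
  assumes g: "\<And>\<xi>. \<xi> \<in> I \<Longrightarrow> 0 \<le> g \<xi>"
    and le: "(\<integral>\<^sup>+\<xi>. ennreal (g \<xi>) \<partial>count_space I) \<le> ennreal c" and c: "0 \<le> c"
  shows "g summable_on I" and "infsum g I \<le> c"
proof -
  have finite_sum: "sum g F \<le> c" if F: "finite F" "F \<subseteq> I" for F
  proof -
    have "ennreal (sum g F) = (\<integral>\<^sup>+\<xi>. ennreal (g \<xi>) * indicator F \<xi> \<partial>count_space I)"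
      using F g by (subst nn_integral_count_space'[of F]) (auto simp: sum_ennreal subset_iff)
    also have "\<dots> \<le> (\<integral>\<^sup>+\<xi>. ennreal (g \<xi>) \<partial>count_space I)"
      by (intro nn_integral_mono) (simp split: split_indicator)
    also note le
    finally show ?thesis using c by (simp add: ennreal_le_iff)
  qed
  show summable: "g summable_on I"
    using g finite_sum by (intro nonneg_bdd_above_summable_on bdd_aboveI) auto
  show "infsum g I \<le> c"
    using summable finite_sum by (rule infsum_le_finite_sums)
qed

lemma ennreal_dyadic_rescale:
  fixes k :: int and c p :: real
  assumes "0 \<le> c"
  shows "ennreal (2 powr (real_of_int k * p)) * ennreal (c / 2 powr real_of_int k)
      = ennreal c * ennreal (2 powr (real_of_int k * (p - 1)))"
    and "ennreal (2 powr (real_of_int k * p)) * ennreal (c / (2 powr real_of_int k)\<^sup>2)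
      = ennreal c * ennreal (2 powr (- (real_of_int k * (2 - p))))"
proof -
  have "2 powr (real_of_int k * p) / 2 powr real_of_int k = 2 powr (real_of_int k * (p - 1))"
    by (simp add: powr_diff[symmetric] algebra_simps)
  then have "2 powr (real_of_int k * p) * (c / 2 powr real_of_int k) = c * 2 powr (real_of_int k * (p - 1))"
    by (metis times_divide_eq_right mult.commute)
  then show "ennreal (2 powr (real_of_int k * p)) * ennreal (c / 2 powr real_of_int k)
      = ennreal c * ennreal (2 powr (real_of_int k * (p - 1)))"
    using assms by (simp only: ennreal_mult[symmetric] powr_ge_zero divide_nonneg_pos powr_gt_zero)
  have "(2 powr real_of_int k)\<^sup>2 = 2 powr (real_of_int k + real_of_int k)"
    by (simp only: power2_eq_square powr_add)
  then have "2 powr (real_of_int k * p) / (2 powr real_of_int k)\<^sup>2 = 2 powr (- (real_of_int k * (2 - p)))"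
    by (simp add: powr_diff[symmetric] algebra_simps)
  then have "2 powr (real_of_int k * p) * (c / (2 powr real_of_int k)\<^sup>2) = c * 2 powr (- (real_of_int k * (2 - p)))"
    by (metis times_divide_eq_right mult.commute)
  then show "ennreal (2 powr (real_of_int k * p)) * ennreal (c / (2 powr real_of_int k)\<^sup>2)
      = ennreal c * ennreal (2 powr (- (real_of_int k * (2 - p))))"
    using assms by (simp only: ennreal_mult[symmetric] powr_ge_zero divide_nonneg_nonneg zero_le_power2)
qed

locale paley_setting =
  fixes M :: "'a measure" and I :: "'i set" and u v :: "'i \<Rightarrow> 'a \<Rightarrow> complex"
    and \<phi> :: "'i \<Rightarrow> real" and K B M\<phi> :: real
  assumes countable_I: "countable I"
    and v_L2: "\<And>\<xi>. \<xi> \<in> I \<Longrightarrow> in_Lp M 2 (v \<xi>)"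
    and v_Linf: "\<And>\<xi>. \<xi> \<in> I \<Longrightarrow> in_Linf M (v \<xi>)"
    and u_Linf_pos: "\<And>\<xi>. \<xi> \<in> I \<Longrightarrow> 0 < Linf_norm M (u \<xi>)"
    and v_Linf_le: "\<And>\<xi>. \<xi> \<in> I \<Longrightarrow> Linf_norm M (v \<xi>) \<le> K * Linf_norm M (u \<xi>)"
    and K_nonneg: "0 \<le> K"
    and bessel: "\<And>h. in_Lp M 2 h \<Longrightarrow>
      (\<integral>\<^sup>+\<xi>. ennreal ((cmod (FL M v h \<xi>))\<^sup>2) \<partial>count_space I) \<le> ennreal (B * (\<integral>x. (cmod (h x))\<^sup>2 \<partial>M))"
    and B_nonneg: "0 \<le> B"
    and \<phi>_pos: "\<And>\<xi>. \<xi> \<in> I \<Longrightarrow> 0 < \<phi> \<xi>"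
    and distribution_le: "\<And>t. 0 < t \<Longrightarrow>
      ennreal t * infsum (\<lambda>\<xi>. ennreal ((Linf_norm M (u \<xi>))\<^sup>2)) {\<xi>\<in>I. t \<le> \<phi> \<xi>} \<le> ennreal M\<phi>"
    and M\<phi>_pos: "0 < M\<phi>"
begin

text \<open>The Paley sum is the \<open>p\<close>-th moment of \<open>paley_ratio f\<close> with respect to the weights
  \<open>paley_weight\<close> (see \<open>paley_term_eq\<close>); \<open>distribution_le\<close> is a weak-type bound for \<open>\<phi>\<close>
  with respect to the weights \<open>(Linf_norm M (u \<xi>))\<^sup>2\<close>.\<close>

definition paley_weight :: "'i \<Rightarrow> real" where
  "paley_weight \<xi> = (Linf_norm M (u \<xi>) * \<phi> \<xi>)\<^sup>2"

definition paley_ratio :: "('a \<Rightarrow> complex) \<Rightarrow> 'i \<Rightarrow> real" where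
  "paley_ratio f \<xi> = cmod (FL M v f \<xi>) / (Linf_norm M (u \<xi>) * \<phi> \<xi>)"

lemma paley_term_eq:
  assumes "\<xi> \<in> I"
  shows "cmod (FL M v f \<xi>) powr p * Linf_norm M (u \<xi>) powr (2 - p) * \<phi> \<xi> powr (2 - p)
       = paley_weight \<xi> * paley_ratio f \<xi> powr p"
proof -
  define c where "c = Linf_norm M (u \<xi>) * \<phi> \<xi>"
  have a: "0 < Linf_norm M (u \<xi>)" and \<phi>: "0 < \<phi> \<xi>"
    using u_Linf_pos[OF assms] \<phi>_pos[OF assms] by auto
  then have c: "0 < c" by (simp add: c_def)
  have "paley_weight \<xi> * paley_ratio f \<xi> powr p = c powr 2 * (cmod (FL M v f \<xi>) powr p / c powr p)"
    using c by (simp add: paley_weight_def paley_ratio_def c_def[symmetric] powr_divide powr_numeral)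
  also have "\<dots> = cmod (FL M v f \<xi>) powr p * c powr (2 - p)"
    by (simp add: powr_diff)
  also have "c powr (2 - p) = Linf_norm M (u \<xi>) powr (2 - p) * \<phi> \<xi> powr (2 - p)"
    using a \<phi> by (simp add: c_def powr_mult)
  finally show ?thesis by (simp add: mult.assoc)
qed

lemma FL_high_part_le:
  assumes f: "in_Lp M p f" and p: "1 \<le> p" and t: "0 < t" and \<xi>: "\<xi> \<in> I"
  shows "cmod (FL M v (high_part t f) \<xi>) \<le> K * Linf_norm M (u \<xi>) * (\<integral>x. cmod (high_part t f x) \<partial>M)"
proof -
  have "high_part t f \<in> borel_measurable M"
    using f by (simp add: in_Lp_def borel_measurable_high_part)
  then have "cmod (FL M v (high_part t f) \<xi>) \<le> Linf_norm M (v \<xi>) * (\<integral>x. cmod (high_part t f x) \<partial>M)"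
    unfolding FL_def
    by (rule norm_integral_mult_cnj_le_Linf[OF _ integrable_high_part[OF f p t] v_Linf[OF \<xi>]])
  also have "\<dots> \<le> K * Linf_norm M (u \<xi>) * (\<integral>x. cmod (high_part t f x) \<partial>M)"
    using v_Linf_le[OF \<xi>] by (intro mult_right_mono) auto
  finally show ?thesis .
qed

lemma FL_high_low_split:
  assumes f: "in_Lp M p f" and p: "1 \<le> p" "p \<le> 2" and t: "0 < t" and \<xi>: "\<xi> \<in> I"
  shows "FL M v f \<xi> = FL M v (high_part t f) \<xi> + FL M v (low_part t f) \<xi>"
proof -
  have "high_part t f \<in> borel_measurable M"
    using f by (simp add: in_Lp_def borel_measurable_high_part)
  then have "integrable M (\<lambda>x. high_part t f x * cnj (v \<xi> x))"
    by (rule integrable_mult_cnj_of_Linf[OF _ integrable_high_part[OF f p(1) t] v_Linf[OF \<xi>]])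
  moreover have "integrable M (\<lambda>x. low_part t f x * cnj (v \<xi> x))"
    by (rule integrable_mult_cnj_of_in_L2[OF in_L2_low_part[OF f p(2) t] v_L2[OF \<xi>]])
  ultimately show ?thesis
    unfolding FL_def
    by (simp flip: Bochner_Integration.integral_add distrib_right add: high_part_plus_low_part)
qed

lemma level_contribution_le:
  assumes f: "in_Lp M p f" and p: "1 \<le> p" "p \<le> 2" and s: "0 < s" and t: "0 < t" and \<xi>: "\<xi> \<in> I"
  shows "ennreal (paley_weight \<xi>) * indicator {\<xi>. 2 * s < paley_ratio f \<xi>} \<xi>
    \<le> ennreal (paley_weight \<xi>) * indicator {\<xi>. \<phi> \<xi> < K * (\<integral>x. cmod (high_part t f x) \<partial>M) / s} \<xi>
      + ennreal (1 / s\<^sup>2) * ennreal ((cmod (FL M v (low_part t f) \<xi>))\<^sup>2)"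
proof (cases "2 * s < paley_ratio f \<xi>")
  case level: True
  define a where "a = Linf_norm M (u \<xi>)"
  define E where "E = (\<integral>x. cmod (high_part t f x) \<partial>M)"
  have a: "0 < a" using u_Linf_pos[OF \<xi>] by (simp add: a_def)
  have c: "0 < a * \<phi> \<xi>" using a \<phi>_pos[OF \<xi>] by simp
  have "2 * s * (a * \<phi> \<xi>) < cmod (FL M v f \<xi>)"
    using level c by (simp add: paley_ratio_def a_def pos_less_divide_eq)
  also have "\<dots> \<le> cmod (FL M v (high_part t f) \<xi>) + cmod (FL M v (low_part t f) \<xi>)"
    unfolding FL_high_low_split[OF f p t \<xi>] by (rule norm_triangle_ineq)
  also have "cmod (FL M v (high_part t f) \<xi>) \<le> K * a * E"
    unfolding a_def E_def by (rule FL_high_part_le[OF f p(1) t \<xi>])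
  finally have split: "2 * s * (a * \<phi> \<xi>) < K * a * E + cmod (FL M v (low_part t f) \<xi>)"
    by simp
  show ?thesis
  proof (cases "s * (a * \<phi> \<xi>) < K * a * E")
    case True
    then have "\<phi> \<xi> < K * E / s"
      using a s by (simp add: pos_less_divide_eq mult.commute mult.left_commute)
    then show ?thesis using level by (simp add: E_def)
  next
    case False
    then have "s * (a * \<phi> \<xi>) \<le> cmod (FL M v (low_part t f) \<xi>)"
      using split by simp
    then have "(s * (a * \<phi> \<xi>))\<^sup>2 \<le> (cmod (FL M v (low_part t f) \<xi>))\<^sup>2"
      using s c by (intro power_mono) auto
    then have "paley_weight \<xi> \<le> 1 / s\<^sup>2 * (cmod (FL M v (low_part t f) \<xi>))\<^sup>2"
      using s by (simp add: paley_weight_def a_def power_mult_distrib field_simps)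
    then have "ennreal (paley_weight \<xi>) \<le> ennreal (1 / s\<^sup>2) * ennreal ((cmod (FL M v (low_part t f) \<xi>))\<^sup>2)"
      by (simp add: ennreal_mult''[symmetric] ennreal_leI)
    then show ?thesis
      using level by (simp add: add_increasing)
  qed
qed simp

lemma level_set_le:
  assumes f: "in_Lp M p f" and p: "1 \<le> p" "p \<le> 2" and s: "0 < s" and t: "0 < t"
  shows "(\<integral>\<^sup>+\<xi>. ennreal (paley_weight \<xi>) * indicator {\<xi>. 2 * s < paley_ratio f \<xi>} \<xi> \<partial>count_space I)
    \<le> ennreal (4 * K * M\<phi> / s) * (\<integral>\<^sup>+x. ennreal (cmod (high_part t f x)) \<partial>M)
      + ennreal (B / s\<^sup>2) * (\<integral>\<^sup>+x. ennreal ((cmod (low_part t f x))\<^sup>2) \<partial>M)"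
proof -
  define E1 where "E1 = (\<integral>x. cmod (high_part t f x) \<partial>M)"
  define E2 where "E2 = (\<integral>x. (cmod (low_part t f x))\<^sup>2 \<partial>M)"
  have E1: "0 \<le> E1" "ennreal E1 = (\<integral>\<^sup>+x. ennreal (cmod (high_part t f x)) \<partial>M)"
    unfolding E1_def using integrable_high_part[OF f p(1) t]
    by (simp_all add: integral_nonneg_AE nn_integral_eq_integral)
  have low: "in_Lp M 2 (low_part t f)" by (rule in_L2_low_part[OF f p(2) t])
  then have E2: "0 \<le> E2" "ennreal E2 = (\<integral>\<^sup>+x. ennreal ((cmod (low_part t f x))\<^sup>2) \<partial>M)"
    unfolding E2_def by (simp_all add: in_Lp_2_iff integral_nonneg_AE nn_integral_eq_integral)
  have weight: "paley_weight \<xi> = (Linf_norm M (u \<xi>))\<^sup>2 * (\<phi> \<xi>)\<^sup>2" for \<xi>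
    by (simp add: paley_weight_def power_mult_distrib)
  have "(\<integral>\<^sup>+\<xi>. ennreal (paley_weight \<xi>) * indicator {\<xi>. 2 * s < paley_ratio f \<xi>} \<xi> \<partial>count_space I)
    \<le> (\<integral>\<^sup>+\<xi>. ennreal (paley_weight \<xi>) * indicator {\<xi>. \<phi> \<xi> < K * E1 / s} \<xi>
      + ennreal (1 / s\<^sup>2) * ennreal ((cmod (FL M v (low_part t f) \<xi>))\<^sup>2) \<partial>count_space I)"
    unfolding E1_def using level_contribution_le[OF f p s t] by (intro nn_integral_mono) auto
  also have "\<dots> = (\<integral>\<^sup>+\<xi>. ennreal (paley_weight \<xi>) * indicator {\<xi>. \<phi> \<xi> < K * E1 / s} \<xi> \<partial>count_space I)
      + ennreal (1 / s\<^sup>2) * (\<integral>\<^sup>+\<xi>. ennreal ((cmod (FL M v (low_part t f) \<xi>))\<^sup>2) \<partial>count_space I)"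
    by (simp add: nn_integral_add nn_integral_cmult)
  also have "\<dots> \<le> 4 * ennreal (K * E1 / s) * ennreal M\<phi> + ennreal (1 / s\<^sup>2) * ennreal (B * E2)"
  proof (intro add_mono mult_left_mono)
    show "(\<integral>\<^sup>+\<xi>. ennreal (paley_weight \<xi>) * indicator {\<xi>. \<phi> \<xi> < K * E1 / s} \<xi> \<partial>count_space I)
        \<le> 4 * ennreal (K * E1 / s) * ennreal M\<phi>"
      unfolding weight using K_nonneg E1(1) s
      by (intro truncated_second_moment_le[OF countable_I \<phi>_pos _ distribution_le]) auto
    show "(\<integral>\<^sup>+\<xi>. ennreal ((cmod (FL M v (low_part t f) \<xi>))\<^sup>2) \<partial>count_space I) \<le> ennreal (B * E2)"
      unfolding E2_def by (rule bessel[OF low])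
  qed simp_all
  also have "\<dots> = ennreal (4 * K * M\<phi> / s) * ennreal E1 + ennreal (B / s\<^sup>2) * ennreal E2"
  proof -
    have "4 * ennreal (K * E1 / s) * ennreal M\<phi> = ennreal (4 * (K * E1 / s) * M\<phi>)"
      by (simp only: ennreal_mult''[OF less_imp_le[OF M\<phi>_pos]] ennreal_mult'[of 4] zero_le_numeral
          ennreal_numeral)
    also have "\<dots> = ennreal (4 * K * M\<phi> / s * E1)"
      by (rule arg_cong[where f=ennreal]) simp
    also have "\<dots> = ennreal (4 * K * M\<phi> / s) * ennreal E1"
      by (rule ennreal_mult''[OF E1(1)])
    moreover have "ennreal (1 / s\<^sup>2) * ennreal (B * E2) = ennreal (B / s\<^sup>2) * ennreal E2"
      using B_nonneg E2(1) by (simp add: ennreal_mult'[symmetric] mult.assoc)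
    ultimately show ?thesis by simp
  qed
  finally show ?thesis unfolding E1(2) E2(2) .
qed

lemma paley_sum_le_dyadic:
  assumes p: "0 < p"
  shows "(\<integral>\<^sup>+\<xi>. ennreal (paley_weight \<xi> * paley_ratio f \<xi> powr p) \<partial>count_space I)
    \<le> ennreal (4 powr p) * (\<integral>\<^sup>+k. ennreal (2 powr (real_of_int k * p)) *
         (\<integral>\<^sup>+\<xi>. ennreal (paley_weight \<xi>) * indicator {\<xi>. 2 * 2 powr real_of_int k < paley_ratio f \<xi>} \<xi>
           \<partial>count_space I) \<partial>count_space UNIV)"
proof -
  define L where "L k \<xi> = ennreal (paley_weight \<xi>) * indicator {\<xi>. 2 * 2 powr real_of_int k < paley_ratio f \<xi>} \<xi>"
    for k :: int and \<xi>
  have pointwise: "ennreal (paley_weight \<xi> * paley_ratio f \<xi> powr p)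
      \<le> ennreal (4 powr p) * (\<integral>\<^sup>+k. ennreal (2 powr (real_of_int k * p)) * L k \<xi> \<partial>count_space UNIV)"
    if \<xi>: "\<xi> \<in> I" for \<xi>
  proof -
    have "0 \<le> paley_ratio f \<xi>"
      using u_Linf_pos[OF \<xi>] \<phi>_pos[OF \<xi>] by (simp add: paley_ratio_def)
    from powr_le_dyadic_sum[OF this p]
    have "ennreal (paley_weight \<xi>) * ennreal (paley_ratio f \<xi> powr p)
        \<le> ennreal (paley_weight \<xi>) * (ennreal (4 powr p) * (\<integral>\<^sup>+k. ennreal (2 powr (real_of_int k * p)) *
          indicator {k. 2 * 2 powr real_of_int k < paley_ratio f \<xi>} k \<partial>count_space UNIV))"
      by (rule mult_left_mono) simp
    also have "\<dots> = ennreal (4 powr p) * (\<integral>\<^sup>+k. ennreal (paley_weight \<xi>) * (ennreal (2 powr (real_of_int k * p)) *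
          indicator {k. 2 * 2 powr real_of_int k < paley_ratio f \<xi>} k) \<partial>count_space UNIV)"
      by (simp add: nn_integral_cmult mult.left_commute)
    also have "\<dots> = ennreal (4 powr p) * (\<integral>\<^sup>+k. ennreal (2 powr (real_of_int k * p)) * L k \<xi> \<partial>count_space UNIV)"
      by (simp add: L_def indicator_def mult.left_commute)
    finally show ?thesis
      by (simp add: paley_weight_def ennreal_mult')
  qed
  have "(\<integral>\<^sup>+\<xi>. ennreal (paley_weight \<xi> * paley_ratio f \<xi> powr p) \<partial>count_space I)
    \<le> (\<integral>\<^sup>+\<xi>. ennreal (4 powr p) * (\<integral>\<^sup>+k. ennreal (2 powr (real_of_int k * p)) * L k \<xi> \<partial>count_space UNIV)
         \<partial>count_space I)"
    by (intro nn_integral_mono pointwise) simp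
  also have "\<dots> = ennreal (4 powr p) * (\<integral>\<^sup>+\<xi>. (\<integral>\<^sup>+k. ennreal (2 powr (real_of_int k * p)) * L k \<xi>
         \<partial>count_space UNIV) \<partial>count_space I)"
    by (rule nn_integral_cmult) simp
  also have "(\<integral>\<^sup>+\<xi>. (\<integral>\<^sup>+k. ennreal (2 powr (real_of_int k * p)) * L k \<xi> \<partial>count_space UNIV) \<partial>count_space I)
      = (\<integral>\<^sup>+k. (\<integral>\<^sup>+\<xi>. ennreal (2 powr (real_of_int k * p)) * L k \<xi> \<partial>count_space I) \<partial>count_space UNIV)"
    by (rule nn_integral_count_space_nn_integral) simp_all
  also have "\<dots> = (\<integral>\<^sup>+k. ennreal (2 powr (real_of_int k * p)) * (\<integral>\<^sup>+\<xi>. L k \<xi> \<partial>count_space I) \<partial>count_space UNIV)"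
    by (intro nn_integral_cong nn_integral_cmult) simp
  finally show ?thesis unfolding L_def .
qed

lemma dyadic_level_le:
  fixes k :: int
  assumes f: "in_Lp M p f" and p: "1 \<le> p" "p \<le> 2"
  shows "ennreal (2 powr (real_of_int k * p)) *
      (\<integral>\<^sup>+\<xi>. ennreal (paley_weight \<xi>) * indicator {\<xi>. 2 * 2 powr real_of_int k < paley_ratio f \<xi>} \<xi> \<partial>count_space I)
    \<le> ennreal (4 * K * M\<phi>) * (ennreal (2 powr (real_of_int k * (p - 1))) *
        (\<integral>\<^sup>+x. ennreal (cmod (high_part (M\<phi> * 2 powr real_of_int k) f x)) \<partial>M))
      + ennreal B * (ennreal (2 powr (- (real_of_int k * (2 - p)))) *
        (\<integral>\<^sup>+x. ennreal ((cmod (low_part (M\<phi> * 2 powr real_of_int k) f x))\<^sup>2) \<partial>M))"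
proof -
  define s :: real where "s = 2 powr real_of_int k"
  have s: "0 < s" by (simp add: s_def)
  have t: "0 < M\<phi> * s" using M\<phi>_pos s by simp
  have "0 \<le> 4 * K * M\<phi>" using K_nonneg M\<phi>_pos by simp
  note high = ennreal_dyadic_rescale(1)[OF this, of k p, folded s_def]
  note low = ennreal_dyadic_rescale(2)[OF B_nonneg, of k p, folded s_def]
  have "ennreal (2 powr (real_of_int k * p)) *
      (\<integral>\<^sup>+\<xi>. ennreal (paley_weight \<xi>) * indicator {\<xi>. 2 * s < paley_ratio f \<xi>} \<xi> \<partial>count_space I)
    \<le> ennreal (2 powr (real_of_int k * p)) *
      (ennreal (4 * K * M\<phi> / s) * (\<integral>\<^sup>+x. ennreal (cmod (high_part (M\<phi> * s) f x)) \<partial>M)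
      + ennreal (B / s\<^sup>2) * (\<integral>\<^sup>+x. ennreal ((cmod (low_part (M\<phi> * s) f x))\<^sup>2) \<partial>M))"
    using level_set_le[OF f p s t] by (rule mult_left_mono) simp
  also have "\<dots> = ennreal (4 * K * M\<phi>) * (ennreal (2 powr (real_of_int k * (p - 1))) *
        (\<integral>\<^sup>+x. ennreal (cmod (high_part (M\<phi> * s) f x)) \<partial>M))
      + ennreal B * (ennreal (2 powr (- (real_of_int k * (2 - p)))) *
        (\<integral>\<^sup>+x. ennreal ((cmod (low_part (M\<phi> * s) f x))\<^sup>2) \<partial>M))"
    by (simp only: distrib_left mult.assoc[symmetric] high low)
  finally show ?thesis unfolding s_def .
qed

lemma paley_sum_le_of_less_2:
  assumes f: "in_Lp M p f" and p: "1 < p" "p < 2"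
  shows "(\<integral>\<^sup>+\<xi>. ennreal (paley_weight \<xi> * paley_ratio f \<xi> powr p) \<partial>count_space I)
    \<le> ennreal (4 powr p * (4 * K / (1 - 2 powr (- (p - 1))) + B / (1 - 2 powr (- (2 - p))))
         * M\<phi> powr (2 - p) * (\<integral>x. cmod (f x) powr p \<partial>M))"
proof -
  have [measurable]: "f \<in> borel_measurable M" and int: "integrable M (\<lambda>x. cmod (f x) powr p)"
    using f by (simp_all add: in_Lp_def)
  define J where "J = (\<integral>x. cmod (f x) powr p \<partial>M)"
  have J: "0 \<le> J" "(\<integral>\<^sup>+x. ennreal (cmod (f x) powr p) \<partial>M) = ennreal J"
    unfolding J_def using int by (simp_all add: integral_nonneg_AE nn_integral_eq_integral)
  define D1 where "D1 = 1 - 2 powr (- (p - 1))"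
  define D2 where "D2 = 1 - 2 powr (- (2 - p))"
  have D: "0 < D1" "0 < D2"
    using two_powr_neg_less_one[of "p - 1"] two_powr_neg_less_one[of "2 - p"] p
    by (simp_all add: D1_def D2_def)
  define H where "H k = (\<integral>\<^sup>+x. ennreal (cmod (high_part (M\<phi> * 2 powr real_of_int k) f x)) \<partial>M)" for k :: int
  define L where "L k = (\<integral>\<^sup>+x. ennreal ((cmod (low_part (M\<phi> * 2 powr real_of_int k) f x))\<^sup>2) \<partial>M)" for k :: int
  have "(\<integral>\<^sup>+\<xi>. ennreal (paley_weight \<xi> * paley_ratio f \<xi> powr p) \<partial>count_space I)
    \<le> ennreal (4 powr p) * (\<integral>\<^sup>+k. ennreal (2 powr (real_of_int k * p)) *
         (\<integral>\<^sup>+\<xi>. ennreal (paley_weight \<xi>) * indicator {\<xi>. 2 * 2 powr real_of_int k < paley_ratio f \<xi>} \<xi>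
           \<partial>count_space I) \<partial>count_space UNIV)"
    using p by (intro paley_sum_le_dyadic) simp
  also have "\<dots> \<le> ennreal (4 powr p) * (\<integral>\<^sup>+k. ennreal (4 * K * M\<phi>) * (ennreal (2 powr (real_of_int k * (p - 1))) * H k)
      + ennreal B * (ennreal (2 powr (- (real_of_int k * (2 - p)))) * L k) \<partial>count_space UNIV)"
    unfolding H_def L_def using f p
    by (intro mult_left_mono nn_integral_mono dyadic_level_le) simp_all
  also have "\<dots> = ennreal (4 powr p) * (ennreal (4 * K * M\<phi>) *
        (\<integral>\<^sup>+k. ennreal (2 powr (real_of_int k * (p - 1))) * H k \<partial>count_space UNIV)
      + ennreal B * (\<integral>\<^sup>+k. ennreal (2 powr (- (real_of_int k * (2 - p)))) * L k \<partial>count_space UNIV))"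
    by (simp add: nn_integral_add nn_integral_cmult)
  also have "\<dots> \<le> ennreal (4 powr p) * (ennreal (4 * K * M\<phi>) * (ennreal (M\<phi> powr (1 - p) / D1) * ennreal J)
      + ennreal B * (ennreal (M\<phi> powr (2 - p) / D2) * ennreal J))"
    unfolding H_def L_def D1_def D2_def J(2)[symmetric]
    using M\<phi>_pos p
    by (intro mult_left_mono add_mono dyadic_sum_high_parts_le dyadic_sum_low_parts_le) simp_all
  also have "\<dots> = ennreal (4 powr p * (4 * K / D1 + B / D2) * M\<phi> powr (2 - p) * J)"
  proof -
    define c1 c2 where "c1 = M\<phi> powr (1 - p) / D1" and "c2 = M\<phi> powr (2 - p) / D2"
    have nonneg: "0 \<le> 4 * K * M\<phi>" "0 \<le> c1" "0 \<le> c2" "0 \<le> c1 * J" "0 \<le> c2 * J"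
      "0 \<le> 4 * K * M\<phi> * (c1 * J)" "0 \<le> B * (c2 * J)"
      using K_nonneg M\<phi>_pos B_nonneg D J(1) by (simp_all add: c1_def c2_def)
    have "ennreal (4 powr p) * (ennreal (4 * K * M\<phi>) * (ennreal c1 * ennreal J) + ennreal B * (ennreal c2 * ennreal J))
      = ennreal (4 powr p * (4 * K * M\<phi> * (c1 * J) + B * (c2 * J)))"
      using nonneg B_nonneg J(1)
      by (simp only: ennreal_mult[symmetric] ennreal_plus[symmetric] add_nonneg_nonneg powr_ge_zero)
    also have "4 * K * M\<phi> * (c1 * J) + B * (c2 * J) = (4 * K / D1 + B / D2) * M\<phi> powr (2 - p) * J"
      using M\<phi>_pos powr_mult_base[of M\<phi> "1 - p"] by (simp add: c1_def c2_def field_simps)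
    finally show ?thesis by (simp add: c1_def c2_def mult.assoc)
  qed
  finally show ?thesis unfolding D1_def D2_def J_def .
qed

lemma paley_sum_le:
  assumes f: "in_Lp M p f" and p: "1 < p" "p \<le> 2"
  shows "(\<integral>\<^sup>+\<xi>. ennreal (paley_weight \<xi> * paley_ratio f \<xi> powr p) \<partial>count_space I)
    \<le> ennreal (paley_constant K B p * M\<phi> powr (2 - p) * (\<integral>x. cmod (f x) powr p \<partial>M))"
proof (cases "p = 2")
  case True
  have "paley_weight \<xi> * paley_ratio f \<xi> powr 2 = (cmod (FL M v f \<xi>))\<^sup>2" if "\<xi> \<in> I" for \<xi>
    using u_Linf_pos[OF that] \<phi>_pos[OF that]
    by (simp add: paley_weight_def paley_ratio_def powr_numeral power_divide)
  then have "(\<integral>\<^sup>+\<xi>. ennreal (paley_weight \<xi> * paley_ratio f \<xi> powr p) \<partial>count_space I)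
      = (\<integral>\<^sup>+\<xi>. ennreal ((cmod (FL M v f \<xi>))\<^sup>2) \<partial>count_space I)"
    using True by (intro nn_integral_cong) simp
  also have "\<dots> \<le> ennreal (B * (\<integral>x. (cmod (f x))\<^sup>2 \<partial>M))"
    using f True by (intro bessel) simp
  finally show ?thesis
    using True M\<phi>_pos by (simp add: paley_constant_def)
next
  case False
  then show ?thesis
    using paley_sum_le_of_less_2[OF f p(1)] p by (simp add: paley_constant_def)
qed

lemma paley_inequality:
  assumes f: "in_Lp M p f" and p: "1 < p" "p \<le> 2"
  defines "term \<equiv> \<lambda>\<xi>. cmod (FL M v f \<xi>) powr p * Linf_norm M (u \<xi>) powr (2 - p) * \<phi> \<xi> powr (2 - p)"
  shows "term summable_on I"
    and "infsum term I powr (1 / p)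
      \<le> paley_constant K B p powr (1 / p) * M\<phi> powr ((2 - p) / p) * Lp_norm M p f"
proof -
  define J where "J = (\<integral>x. cmod (f x) powr p \<partial>M)"
  have J: "0 \<le> J" by (simp add: J_def integral_nonneg_AE)
  have C: "0 \<le> paley_constant K B p"
    using paley_constant_nonneg[OF K_nonneg B_nonneg p] .
  have "(\<integral>\<^sup>+\<xi>. ennreal (term \<xi>) \<partial>count_space I)
      = (\<integral>\<^sup>+\<xi>. ennreal (paley_weight \<xi> * paley_ratio f \<xi> powr p) \<partial>count_space I)"
    by (intro nn_integral_cong) (simp add: term_def paley_term_eq)
  also have "\<dots> \<le> ennreal (paley_constant K B p * M\<phi> powr (2 - p) * J)"
    unfolding J_def by (rule paley_sum_le[OF f p])
  finally have nn: "(\<integral>\<^sup>+\<xi>. ennreal (term \<xi>) \<partial>count_space I)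
      \<le> ennreal (paley_constant K B p * M\<phi> powr (2 - p) * J)" .
  have term_nonneg: "0 \<le> term \<xi>" for \<xi> by (simp add: term_def)
  have bound_nonneg: "0 \<le> paley_constant K B p * M\<phi> powr (2 - p) * J" using C J by simp
  show "term summable_on I"
    using term_nonneg nn bound_nonneg by (rule summable_on_infsum_le_of_nn_integral_le)
  have "infsum term I \<le> paley_constant K B p * M\<phi> powr (2 - p) * J"
    using term_nonneg nn bound_nonneg by (rule summable_on_infsum_le_of_nn_integral_le)
  then have "infsum term I powr (1 / p) \<le> (paley_constant K B p * M\<phi> powr (2 - p) * J) powr (1 / p)"
    using p term_nonneg by (intro powr_mono2) (auto intro: infsum_nonneg)
  also have "\<dots> = paley_constant K B p powr (1 / p) * M\<phi> powr ((2 - p) / p) * Lp_norm M p f"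
    using C J by (simp add: Lp_norm_def J_def powr_mult powr_powr)
  finally show "infsum term I powr (1 / p)
      \<le> paley_constant K B p powr (1 / p) * M\<phi> powr ((2 - p) / p) * Lp_norm M p f" .
qed

end

lemma le_M_phi:
  "0 < t \<Longrightarrow> ennreal t * infsum (\<lambda>\<xi>. ennreal ((Linf_norm M (u \<xi>))\<^sup>2)) {\<xi>\<in>I. t \<le> \<phi> \<xi>} \<le> M_phi M I u \<phi>"
  unfolding M_phi_def by (rule SUP_upper) simp

lemma M_phi_pos:
  assumes "\<xi> \<in> I" "0 < \<phi> \<xi>" "0 < Linf_norm M (u \<xi>)"
  shows "0 < M_phi M I u \<phi>"
proof -
  have "{\<xi>} \<in> {F. finite F \<and> F \<subseteq> {\<eta>\<in>I. \<phi> \<xi> \<le> \<phi> \<eta>}}"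
    using assms(1) by simp
  then have "sum (\<lambda>\<xi>. ennreal ((Linf_norm M (u \<xi>))\<^sup>2)) {\<xi>}
      \<le> infsum (\<lambda>\<xi>. ennreal ((Linf_norm M (u \<xi>))\<^sup>2)) {\<eta>\<in>I. \<phi> \<xi> \<le> \<phi> \<eta>}"
    unfolding nonneg_infsum_complete[OF zero_le] by (rule SUP_upper)
  then have "ennreal (\<phi> \<xi>) * ennreal ((Linf_norm M (u \<xi>))\<^sup>2)
      \<le> ennreal (\<phi> \<xi>) * infsum (\<lambda>\<xi>. ennreal ((Linf_norm M (u \<xi>))\<^sup>2)) {\<eta>\<in>I. \<phi> \<xi> \<le> \<phi> \<eta>}"
    by (intro mult_left_mono) simp_all
  also have "\<dots> \<le> M_phi M I u \<phi>"
    by (rule le_M_phi[OF assms(2)])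
  finally have "ennreal (\<phi> \<xi>) * ennreal ((Linf_norm M (u \<xi>))\<^sup>2) \<le> M_phi M I u \<phi>" .
  moreover have "0 < ennreal (\<phi> \<xi>) * ennreal ((Linf_norm M (u \<xi>))\<^sup>2)"
    using assms(2,3) by (simp add: ennreal_mult''[symmetric])
  ultimately show ?thesis by simp
qed

lemma bdd_above_ratio_imp_factor:
  fixes a b :: "'i \<Rightarrow> real"
  assumes "bdd_above ((\<lambda>\<xi>. a \<xi> / b \<xi>) ` I)" and "\<And>\<xi>. \<xi> \<in> I \<Longrightarrow> 0 < b \<xi>"
  shows "\<exists>K\<ge>0. \<forall>\<xi>\<in>I. a \<xi> \<le> K * b \<xi>"
proof -
  obtain K0 where K0: "\<And>\<xi>. \<xi> \<in> I \<Longrightarrow> a \<xi> / b \<xi> \<le> K0"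
    using assms(1) by (auto simp: bdd_above_def)
  have "a \<xi> \<le> max K0 0 * b \<xi>" if "\<xi> \<in> I" for \<xi>
  proof -
    have "a \<xi> / b \<xi> \<le> max K0 0" using K0[OF that] by simp
    then show ?thesis using assms(2)[OF that] by (simp add: pos_divide_le_eq)
  qed
  then show ?thesis by (intro exI[of _ "max K0 0"]) simp
qed

lemma paley_inequality_M_phi:
  fixes \<phi> :: "'i \<Rightarrow> real"
  assumes I: "countable I"
    and v_norm: "\<forall>\<xi>\<in>I. in_Lp M 2 (v \<xi>) \<and> Lp_norm M 2 (v \<xi>) = 1"
    and v_Linf: "\<forall>\<xi>\<in>I. in_Linf M (v \<xi>)"
    and u_pos: "\<And>\<xi>. \<xi> \<in> I \<Longrightarrow> 0 < Linf_norm M (u \<xi>)"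
    and K: "0 \<le> K" "\<And>\<xi>. \<xi> \<in> I \<Longrightarrow> Linf_norm M (v \<xi>) \<le> K * Linf_norm M (u \<xi>)"
    and B: "0 \<le> B" and bessel: "\<forall>h. in_Lp M 2 h \<longrightarrow>
      (\<integral>\<^sup>+\<xi>. ennreal ((cmod (FL M v h \<xi>))\<^sup>2) \<partial>count_space I) \<le> ennreal (B * (\<integral>x. (cmod (h x))\<^sup>2 \<partial>M))"
    and p: "1 < p" "p \<le> 2"
    and \<phi>: "\<forall>\<xi>\<in>I. 0 < \<phi> \<xi>" and finite: "M_phi M I u \<phi> < \<infinity>" and f: "in_Lp M p f"
  defines "term \<equiv> \<lambda>\<xi>. cmod (FL M v f \<xi>) powr p * Linf_norm M (u \<xi>) powr (2 - p) * \<phi> \<xi> powr (2 - p)"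
  shows "term summable_on I \<and> infsum term I powr (1 / p)
    \<le> paley_constant K B p powr (1 / p) * enn2real (M_phi M I u \<phi>) powr ((2 - p) / p) * Lp_norm M p f"
proof (cases "I = {}")
  case False
  then obtain \<xi> where "\<xi> \<in> I" by blast
  then have "0 < M_phi M I u \<phi>"
    using \<phi> u_pos by (intro M_phi_pos) auto
  with finite have M\<phi>: "M_phi M I u \<phi> = ennreal (enn2real (M_phi M I u \<phi>))" "0 < enn2real (M_phi M I u \<phi>)"
    by (auto simp: enn2real_positive_iff)
  interpret paley_setting M I u v \<phi> K B "enn2real (M_phi M I u \<phi>)"
  proof
    show "ennreal t * infsum (\<lambda>\<xi>. ennreal ((Linf_norm M (u \<xi>))\<^sup>2)) {\<xi>\<in>I. t \<le> \<phi> \<xi>}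
        \<le> ennreal (enn2real (M_phi M I u \<phi>))" if "0 < t" for t
      using le_M_phi[OF that] M\<phi>(1) by simp
  qed (use I v_norm v_Linf u_pos K B bessel \<phi> M\<phi>(2) in auto)
  show ?thesis
    using paley_inequality[OF f p] unfolding term_def by blast
qed (simp add: term_def Lp_norm_def)

theorem mainTheorem5:
  fixes M :: "'a measure" and I :: "'i set"
    and u v :: "'i \<Rightarrow> 'a \<Rightarrow> complex" and p :: real
  assumes I_countable: "countable I"
    and u_norm: "\<forall>\<xi>\<in>I. in_Lp M 2 (u \<xi>) \<and> Lp_norm M 2 (u \<xi>) = 1"
    and v_norm: "\<forall>\<xi>\<in>I. in_Lp M 2 (v \<xi>) \<and> Lp_norm M 2 (v \<xi>) = 1"
    and biorth: "\<forall>\<xi>\<in>I. \<forall>\<eta>\<in>I. L2_inner M (u \<xi>) (v \<eta>) = (if \<xi> = \<eta> then 1 else 0)"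
    and riesz: "riesz_basis M I u"
    and u_Linf: "\<forall>\<xi>\<in>I. in_Linf M (u \<xi>)"
    and v_Linf: "\<forall>\<xi>\<in>I. in_Linf M (v \<xi>)"
    and p_range: "1 < p" "p \<le> 2"
    and ratio_bdd: "bdd_above ((\<lambda>\<xi>. Linf_norm M (v \<xi>) / Linf_norm M (u \<xi>)) ` I)"
  shows "\<exists>C. \<forall>\<phi> :: 'i \<Rightarrow> real. \<forall>f.
           (\<forall>\<xi>\<in>I. 0 < \<phi> \<xi>) \<longrightarrow> M_phi M I u \<phi> < \<infinity> \<longrightarrow> in_Lp M p f \<longrightarrow>
           ((\<lambda>\<xi>. cmod (FL M v f \<xi>) powr p * Linf_norm M (u \<xi>) powr (2 - p) * \<phi> \<xi> powr (2 - p))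
               summable_on I) \<and>
           (\<Sum>\<^sub>\<infinity>\<xi>\<in>I. cmod (FL M v f \<xi>) powr p * Linf_norm M (u \<xi>) powr (2 - p) * \<phi> \<xi> powr (2 - p))
               powr (1 / p)
             \<le> C * enn2real (M_phi M I u \<phi>) powr ((2 - p) / p) * Lp_norm M p f"
proof -
  have u_pos: "0 < Linf_norm M (u \<xi>)" if "\<xi> \<in> I" for \<xi>
    using u_norm u_Linf that by (intro Linf_norm_pos) auto
  obtain B where B: "0 < B" and bessel: "\<forall>h. in_Lp M 2 h \<longrightarrow>
      (\<integral>\<^sup>+\<xi>. ennreal ((cmod (FL M v h \<xi>))\<^sup>2) \<partial>count_space I) \<le> ennreal (B * (\<integral>x. (cmod (h x))\<^sup>2 \<partial>M))"
    using FL_bessel_inequality[OF I_countable v_norm biorth riesz] by blast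
  have "\<exists>K\<ge>0. \<forall>\<xi>\<in>I. Linf_norm M (v \<xi>) \<le> K * Linf_norm M (u \<xi>)"
    using ratio_bdd u_pos by (rule bdd_above_ratio_imp_factor)
  then obtain K where K: "0 \<le> K" "\<And>\<xi>. \<xi> \<in> I \<Longrightarrow> Linf_norm M (v \<xi>) \<le> K * Linf_norm M (u \<xi>)"
    by auto
  show ?thesis
    by (intro exI[of _ "paley_constant K B p powr (1 / p)"] allI impI
        paley_inequality_M_phi[OF I_countable v_norm v_Linf u_pos K less_imp_le[OF B] bessel p_range])
qed

end
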